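(* Let $\epsilon=(\epsilon_1,\epsilon_2)\in[0,\infty)^2$ and $1\le p\le\infty$. Let $\epsilon^*=(\epsilon_1^*,\epsilon_2^* )$ with $\epsilon_1^*=\epsilon_2^*=(1+\epsilon_1)(1+\epsilon_2)-1=\epsilon_1+\epsilon_2+\epsilon_1\epsilon_2$. Let $X,Y,Z$ be compact pmm-spaces. Then \[ \mathsf{sPGW}_{\epsilon^*,p}(X,Z)\le(1+\epsilon_2)^{2/p}\,\mathsf{sPGW}_{\epsilon,p}(X,Y)+(1+\epsilon_1)^{2/p}\,\mathsf{sPGW}_{\epsilon,p}(Y,Z), \] where $(1+\epsilon_i)^{2/\infty}=1$.
   Context: A pmm-space is a triple $(X,d_X,\mu_X)$ with $(X,d_X)$ a complete separable metric space and $\mu_X$ a Borel probability measure; compact means $(X,d_X)$ compact. For a measure $\pi$ on $X\times Y$, $\pi_X,\pi_Y$ are its marginals. For $p<\infty$, $\|d_X-d_Y\|_{L^p(\pi\otimes\pi)}=\left(\iint|d_X(x,x')-d_Y(y,y')|^p\,d\pi(x,y)\,d\pi(x',y')\right)^{1/p}$; for $p=\infty$ it is the $\pi\otimes\pi$-essential supremum. For $\epsilon=(\epsilon_1,\epsilon_2)$, $\mathcal{S}_\epsilon(\mu_X,\mu_Y)$ is the set of Borel probability measures $\pi$ on $X\times Y$ with $\pi_X,\mu_X$ mutually absolutely continuous and $\|d\pi_X/d\mu_X\|_{L^\infty(\mu_X)},\|d\mu_X/d\pi_X\|_{L^\infty(\pi_X)}\le1+\epsilon_1$, and $\pi_Y,\mu_Y$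 mutually absolutely continuous with $\|d\pi_Y/d\mu_Y\|_{L^\infty(\mu_Y)},\|d\mu_Y/d\pi_Y\|_{L^\infty(\pi_Y)}\le1+\epsilon_2$. $\mathsf{sPGW}_{\epsilon,p}(X,Y)=\inf_{\pi\in\mathcal{S}_\epsilon(\mu_X,\mu_Y)}\|d_X-d_Y\|_{L^p(\pi\otimes\pi)}$. *)

theory Defs
  imports "HOL-Probability.Probability"
begin

text \<open>A compact pmm-space: the metric space is the type 'a itself (metric dist),
  compact, carrying a Borel probability measure.\<close>
definition compact_pmm :: "'a::metric_space measure \<Rightarrow> bool" where
  "compact_pmm \<mu> \<longleftrightarrow> compact (UNIV :: 'a set) \<and> prob_space \<mu> \<and> sets \<mu> = sets borel"

definition mutual_bdd :: "'a measure \<Rightarrow> 'a measure \<Rightarrow> real \<Rightarrow> bool" where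
  "mutual_bdd \<nu> \<mu> e \<longleftrightarrow>
     absolutely_continuous \<mu> \<nu> \<and> absolutely_continuous \<nu> \<mu> \<and>
     (AE x in \<mu>. RN_deriv \<mu> \<nu> x \<le> ennreal (1 + e)) \<and>
     (AE x in \<nu>. RN_deriv \<nu> \<mu> x \<le> ennreal (1 + e))"

definition sS :: "real \<Rightarrow> real \<Rightarrow> 'a::topological_space measure \<Rightarrow> 'b::topological_space measure
    \<Rightarrow> ('a \<times> 'b) measure set" where
  "sS e1 e2 \<mu> \<nu> = {\<pi>. prob_space \<pi> \<and> sets \<pi> = sets borel \<and>
      mutual_bdd (distr \<pi> borel fst) \<mu> e1 \<and> mutual_bdd (distr \<pi> borel snd) \<nu> e2}"

definition distortion :: "('a::metric_space \<times> 'b::metric_space) \<times> ('a \<times> 'b) \<Rightarrow> real" where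
  "distortion z = \<bar>dist (fst (fst z)) (fst (snd z)) - dist (snd (fst z)) (snd (snd z))\<bar>"

text \<open>L^p norm of the distortion w.r.t. pi (x) pi, for p in [1, infinity].
  (Finite for compact spaces, hence stated as a real number.)\<close>
definition dis_norm :: "ennreal \<Rightarrow> ('a::metric_space \<times> 'b::metric_space) measure \<Rightarrow> real" where
  "dis_norm p \<pi> =
     (if p = \<top> then real_of_ereal (esssup (\<pi> \<Otimes>\<^sub>M \<pi>) (\<lambda>z. ereal (distortion z)))
      else (enn2real (\<integral>\<^sup>+ z. ennreal (distortion z powr enn2real p) \<partial>(\<pi> \<Otimes>\<^sub>M \<pi>)))
             powr (1 / enn2real p))"

definition sPGW :: "real \<Rightarrow> real \<Rightarrow> ennreal \<Rightarrow> 'a::metric_space measure \<Rightarrow> 'b::metric_space measure \<Rightarrow> real" where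
  "sPGW e1 e2 p \<mu> \<nu> = Inf (dis_norm p ` sS e1 e2 \<mu> \<nu>)"

definition pfactor :: "ennreal \<Rightarrow> real \<Rightarrow> real" where
  "pfactor p e = (if p = \<top> then 1 else (1 + e) powr (2 / enn2real p))"

end

theory Submission
  imports Defs
begin

text \<open>Take couplings \<open>\<pi>\<^sub>1\<close> of \<open>(X, Y)\<close> and \<open>\<pi>\<^sub>2\<close> of \<open>(Y, Z)\<close>, with \<open>Y\<close>-marginals
  \<open>\<nu>\<^sub>1\<close> and \<open>\<nu>\<^sub>2\<close>, and cut \<open>Y\<close> into finitely many Borel cells \<open>B\<^sub>i\<close> of diameter at most \<open>\<delta>\<close>.
  Glue the couplings along the cells: on \<open>(X \<times> Y) \<times> (Y \<times> Z)\<close> take the density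
  \<open>\<Sum>\<^sub>i \<mu>\<^sub>Y(B\<^sub>i) / (\<nu>\<^sub>1(B\<^sub>i) \<nu>\<^sub>2(B\<^sub>i)) \<one>\<^sub>B\<^sub>i(y) \<one>\<^sub>B\<^sub>i(y')\<close> with respect to \<open>\<pi>\<^sub>1 \<otimes> \<pi>\<^sub>2\<close>.
  Its two marginals have the cellwise densities \<open>\<mu>\<^sub>Y(B\<^sub>i) / \<nu>\<^sub>1(B\<^sub>i)\<close> and \<open>\<mu>\<^sub>Y(B\<^sub>i) / \<nu>\<^sub>2(B\<^sub>i)\<close>
  with respect to \<open>\<pi>\<^sub>1\<close> and \<open>\<pi>\<^sub>2\<close>, which lie between \<open>1 / (1 + \<epsilon>\<^sub>2)\<close> and \<open>1 + \<epsilon>\<^sub>2\<close>, resp.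
  \<open>1 / (1 + \<epsilon>\<^sub>1)\<close> and \<open>1 + \<epsilon>\<^sub>1\<close>.  Hence its image on \<open>X \<times> Z\<close> is admissible for \<open>\<epsilon>\<^sup>*\<close>.
  As \<open>y\<close> and \<open>y'\<close> lie in a common cell, the triangle inequality bounds the distortion of the
  composite by those of \<open>\<pi>\<^sub>1\<close> and \<open>\<pi>\<^sub>2\<close> plus \<open>2\<delta>\<close>; integrating against the glued measure costs
  the factor \<open>(1 + \<epsilon>\<^sub>2)\<^sup>2\<close> resp. \<open>(1 + \<epsilon>\<^sub>1)\<^sup>2\<close> on the \<open>p\<close>-th powers, and Minkowski's inequality
  combines the terms.  Letting \<open>\<delta> \<rightarrow> 0\<close> gives the bound.\<close>

section \<open>Borel sets of compact metric spaces\<close>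

lemma compact_metric_countable_basis:
  assumes "compact (UNIV :: 'a::metric_space set)"
  obtains \<B> :: "'a::metric_space set set" where "countable \<B>" "topological_basis \<B>"
proof -
  have "\<forall>n::nat. \<exists>k. finite k \<and> (UNIV::'a set) \<subseteq> (\<Union>x\<in>k. ball x (1 / Suc n))"
    using assms compact_eq_totally_bounded[of "UNIV::'a set"] by simp
  then obtain F where F: "\<And>n. finite (F n)" "\<And>n. (UNIV::'a set) \<subseteq> (\<Union>x\<in>F n. ball x (1 / Suc n))"
    by metis
  define \<B> where "\<B> = (\<Union>n. (\<lambda>x. ball x (1 / Suc n)) ` F n)"
  have "countable \<B>"
    unfolding \<B>_def using F(1) by (intro countable_UN[OF countableI_type] countable_image countable_finite) auto
  moreover have "topological_basis \<B>"
  proof (rule topological_basisI)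
    show "open B'" if "B' \<in> \<B>" for B' using that unfolding \<B>_def by auto
  next
    fix S :: "'a set" and x assume "open S" "x \<in> S"
    then obtain e where e: "e > 0" "ball x e \<subseteq> S" by (meson open_contains_ball)
    obtain n where n: "inverse (real (Suc n)) < e / 2" using reals_Archimedean e by (metis half_gt_zero)
    obtain c where c: "c \<in> F n" "x \<in> ball c (1 / Suc n)" using F(2)[of n] by blast
    have "ball c (1 / Suc n) \<subseteq> ball x e"
    proof
      fix y assume "y \<in> ball c (1 / Suc n)"
      then show "y \<in> ball x e"
        using c(2) n dist_triangle[of x y c] by (simp add: dist_commute inverse_eq_divide)
    qed
    then show "\<exists>B'\<in>\<B>. x \<in> B' \<and> B' \<subseteq> S" using c e(2) unfolding \<B>_def by blast
  qed
  ultimately show ?thesis by (rule that)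
qed

lemma sets_pair_borel_compact:
  assumes "compact (UNIV :: 'a::metric_space set)" "compact (UNIV :: 'b::metric_space set)"
  shows "sets (borel \<Otimes>\<^sub>M borel :: ('a \<times> 'b) measure) = sets borel"
proof
  show "sets (borel \<Otimes>\<^sub>M borel :: ('a \<times> 'b) measure) \<subseteq> sets borel"
  proof (rule sets_pair_in_sets)
    fix a :: "'a set" and b :: "'b set" assume "a \<in> sets borel" "b \<in> sets borel"
    moreover have "fst \<in> borel_measurable (borel :: ('a \<times> 'b) measure)"
      and "snd \<in> borel_measurable (borel :: ('a \<times> 'b) measure)"
      by (intro borel_measurable_continuous_onI continuous_intros)+
    ultimately have "fst -` a \<inter> snd -` b \<in> sets (borel :: ('a \<times> 'b) measure)"
      by (metis measurable_sets sets.Int space_borel inf_top.right_neutral)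
    moreover have "a \<times> b = fst -` a \<inter> snd -` b" by auto
    ultimately show "a \<times> b \<in> sets borel" by simp
  qed
next
  obtain \<A> :: "'a set set" where \<A>: "countable \<A>" "topological_basis \<A>"
    using compact_metric_countable_basis[OF assms(1)] .
  obtain \<B> :: "'b set set" where \<B>: "countable \<B>" "topological_basis \<B>"
    using compact_metric_countable_basis[OF assms(2)] .
  let ?R = "(\<lambda>(a, b). a \<times> b) ` (\<A> \<times> \<B>)"
  have "sets borel = sigma_sets UNIV ?R"
    using \<A> \<B> by (subst borel_eq_countable_basis[of ?R]) (auto intro: topological_basis_prod)
  moreover have "?R \<subseteq> sets (borel \<Otimes>\<^sub>M borel :: ('a \<times> 'b) measure)"
    using topological_basis_open[OF \<A>(2)] topological_basis_open[OF \<B>(2)] by auto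
  ultimately show "sets borel \<subseteq> sets (borel \<Otimes>\<^sub>M borel :: ('a \<times> 'b) measure)"
    using sets.sigma_sets_subset[of ?R "borel \<Otimes>\<^sub>M borel"] by (simp add: space_pair_measure)
qed

lemma measurable_fst_snd_borel:
  assumes "sets M = sets (borel :: ('a::topological_space \<times> 'b::topological_space) measure)"
  shows "fst \<in> borel_measurable M" "snd \<in> borel_measurable M"
  unfolding measurable_cong_sets[OF assms refl]
  by (intro borel_measurable_continuous_onI continuous_intros)+

lemma compact_metric_finite_partition:
  assumes "compact (UNIV :: 'a::metric_space set)" "0 < \<delta>"
  obtains n and B :: "nat \<Rightarrow> 'a::metric_space set"
  where "\<And>i. B i \<in> sets borel" "disjoint_family B" "\<And>y. \<exists>i<n. y \<in> B i"
    "\<And>i y y'. y \<in> B i \<Longrightarrow> y' \<in> B i \<Longrightarrow> dist y y' \<le> \<delta>"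
proof -
  obtain k where k: "finite k" "(UNIV :: 'a set) \<subseteq> (\<Union>x\<in>k. ball x (\<delta> / 2))"
    using assms compact_eq_totally_bounded[of "UNIV :: 'a set"] by (metis half_gt_zero)
  obtain xs where xs: "set xs = k" using finite_list[OF k(1)] by blast
  have cover: "\<exists>i<length xs. y \<in> ball (xs ! i) (\<delta> / 2)" for y
  proof -
    obtain x where "x \<in> k" "y \<in> ball x (\<delta> / 2)" using k(2) by blast
    then show ?thesis using xs by (auto simp: in_set_conv_nth)
  qed
  define B where "B = disjointed (\<lambda>i. ball (xs ! i) (\<delta> / 2))"
  have covered: "\<exists>i<length xs. y \<in> B i" for y
  proof -
    have "y \<in> (\<Union>i\<in>{0..<length xs}. ball (xs ! i) (\<delta> / 2))" using cover[of y] by auto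
    then show ?thesis
      unfolding B_def by (subst (asm) finite_UN_disjointed_eq[symmetric]) auto
  qed
  have small: "dist y y' \<le> \<delta>" if "y \<in> B i" "y' \<in> B i" for i y y'
  proof -
    have "B i \<subseteq> ball (xs ! i) (\<delta> / 2)"
      unfolding B_def by (rule disjointed_subset)
    with that have "y \<in> ball (xs ! i) (\<delta> / 2)" "y' \<in> ball (xs ! i) (\<delta> / 2)"
      by auto
    then show ?thesis using dist_triangle3[of y y' "xs ! i"] by simp
  qed
  have "B i \<in> sets borel" for i
    unfolding B_def disjointed_def by (intro sets.Diff sets.finite_UN borel_open) auto
  moreover have "disjoint_family B"
    unfolding B_def by (rule disjoint_family_disjointed)
  ultimately show ?thesis using covered small by (rule that)
qed

section \<open>Mutually bounded measures\<close>

lemma AE_RN_deriv_le_iff: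
  assumes "finite_measure M" "sets N = sets M" "absolutely_continuous M N"
  shows "(AE x in M. RN_deriv M N x \<le> ennreal c) \<longleftrightarrow>
         (\<forall>A\<in>sets M. emeasure N A \<le> ennreal c * emeasure M A)"
proof -
  interpret M: finite_measure M by fact
  have N: "N = density M (RN_deriv M N)"
    using M.density_RN_deriv assms(2,3) by metis
  have emeasure_N: "emeasure N A = (\<integral>\<^sup>+x. RN_deriv M N x * indicator A x \<partial>M)" if "A \<in> sets M" for A
    using that by (subst N) (simp add: emeasure_density)
  show ?thesis
  proof
    assume bound: "AE x in M. RN_deriv M N x \<le> ennreal c"
    have "emeasure N A \<le> ennreal c * emeasure M A" if "A \<in> sets M" for A
    proof -
      have "emeasure N A \<le> (\<integral>\<^sup>+x. ennreal c * indicator A x \<partial>M)"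
        unfolding emeasure_N[OF that] using bound
        by (intro nn_integral_mono_AE) (auto elim!: eventually_mono intro: mult_right_mono)
      then show ?thesis using that by (simp add: nn_integral_cmult_indicator)
    qed
    then show "\<forall>A\<in>sets M. emeasure N A \<le> ennreal c * emeasure M A" by blast
  next
    assume le: "\<forall>A\<in>sets M. emeasure N A \<le> ennreal c * emeasure M A"
    define S where "S = {x \<in> space M. ennreal c < RN_deriv M N x}"
    have S[measurable]: "S \<in> sets M" unfolding S_def by measurable
    have "AE x in M. RN_deriv M N x * indicator S x \<le> ennreal c * indicator S x"
    proof (rule ccontr)
      assume "\<not> (AE x in M. RN_deriv M N x * indicator S x \<le> ennreal c * indicator S x)"
      moreover have "(\<integral>\<^sup>+x. ennreal c * indicator S x \<partial>M) \<noteq> \<infinity>"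
        using S by (simp add: nn_integral_cmult_indicator ennreal_mult_eq_top_iff M.emeasure_real)
      ultimately have "(\<integral>\<^sup>+x. ennreal c * indicator S x \<partial>M) < (\<integral>\<^sup>+x. RN_deriv M N x * indicator S x \<partial>M)"
        by (intro nn_integral_less) (auto simp: S_def indicator_def less_imp_le intro!: AE_I2)
      also have "\<dots> = emeasure N S" using emeasure_N[OF S] ..
      also have "\<dots> \<le> (\<integral>\<^sup>+x. ennreal c * indicator S x \<partial>M)"
        using le S by (simp add: nn_integral_cmult_indicator)
      finally show False by simp
    qed
    then show "AE x in M. RN_deriv M N x \<le> ennreal c"
      using AE_space
    proof eventually_elim
      case (elim x)
      then show ?case by (cases "x \<in> S") (auto simp: S_def not_less)
    qed
  qed
qed

lemma mutual_bdd_iff: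
  assumes "finite_measure \<mu>" "finite_measure \<nu>" "sets \<nu> = sets \<mu>"
  shows "mutual_bdd \<nu> \<mu> e \<longleftrightarrow>
    (\<forall>A\<in>sets \<mu>. emeasure \<nu> A \<le> ennreal (1 + e) * emeasure \<mu> A \<and>
                 emeasure \<mu> A \<le> ennreal (1 + e) * emeasure \<nu> A)"
    (is "_ \<longleftrightarrow> (\<forall>A\<in>sets \<mu>. ?upper A \<and> ?lower A)")
proof
  assume mb: "mutual_bdd \<nu> \<mu> e"
  then have "absolutely_continuous \<mu> \<nu>" "absolutely_continuous \<nu> \<mu>"
    unfolding mutual_bdd_def by auto
  with mb show "\<forall>A\<in>sets \<mu>. ?upper A \<and> ?lower A"
    using AE_RN_deriv_le_iff[OF assms(1,3)] AE_RN_deriv_le_iff[OF assms(2) assms(3)[symmetric]] assms(3)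
    unfolding mutual_bdd_def by auto
next
  assume le: "\<forall>A\<in>sets \<mu>. ?upper A \<and> ?lower A"
  then have "absolutely_continuous \<mu> \<nu>" "absolutely_continuous \<nu> \<mu>"
    using assms(3) by (auto simp: absolutely_continuous_def null_sets_def)
  with le show "mutual_bdd \<nu> \<mu> e"
    using AE_RN_deriv_le_iff[OF assms(1,3)] AE_RN_deriv_le_iff[OF assms(2) assms(3)[symmetric]] assms(3)
    unfolding mutual_bdd_def by auto
qed

lemma mutual_bdd_refl:
  assumes "finite_measure \<mu>" "0 \<le> e"
  shows "mutual_bdd \<mu> \<mu> e"
proof -
  have "x \<le> ennreal (1 + e) * x" for x :: ennreal
    using mult_right_mono[of 1 "ennreal (1 + e)" x] assms(2) by simp
  then show ?thesis using mutual_bdd_iff[OF assms(1,1) refl] by simp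
qed

lemma mutual_bdd_trans:
  assumes "finite_measure \<mu>" "finite_measure \<nu>" "finite_measure \<kappa>"
    and "sets \<nu> = sets \<mu>" "sets \<mu> = sets \<kappa>" "0 \<le> e" "0 \<le> e'"
    and "mutual_bdd \<nu> \<mu> e" "mutual_bdd \<mu> \<kappa> e'"
  shows "mutual_bdd \<nu> \<kappa> (e + e' + e * e')"
proof -
  have factor: "ennreal (1 + (e + e' + e * e')) = ennreal (1 + e) * ennreal (1 + e')"
    using assms(6,7) by (simp add: ennreal_mult[symmetric] algebra_simps)
  have "emeasure \<nu> A \<le> ennreal (1 + (e + e' + e * e')) * emeasure \<kappa> A \<and>
        emeasure \<kappa> A \<le> ennreal (1 + (e + e' + e * e')) * emeasure \<nu> A" if A: "A \<in> sets \<kappa>" for A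
  proof -
    have \<nu>\<mu>: "emeasure \<nu> A \<le> ennreal (1 + e) * emeasure \<mu> A" "emeasure \<mu> A \<le> ennreal (1 + e) * emeasure \<nu> A"
      using assms(8) A assms(5) unfolding mutual_bdd_iff[OF assms(1,2,4)] by auto
    have \<mu>\<kappa>: "emeasure \<mu> A \<le> ennreal (1 + e') * emeasure \<kappa> A" "emeasure \<kappa> A \<le> ennreal (1 + e') * emeasure \<mu> A"
      using assms(9) A unfolding mutual_bdd_iff[OF assms(3,1,5)] by auto
    have "emeasure \<nu> A \<le> ennreal (1 + e) * (ennreal (1 + e') * emeasure \<kappa> A)"
      using \<nu>\<mu>(1) mult_left_mono[OF \<mu>\<kappa>(1), of "ennreal (1 + e)"] by simp
    moreover have "emeasure \<kappa> A \<le> ennreal (1 + e') * (ennreal (1 + e) * emeasure \<nu> A)"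
      using \<mu>\<kappa>(2) mult_left_mono[OF \<nu>\<mu>(2), of "ennreal (1 + e')"] by simp
    ultimately show ?thesis unfolding factor by (simp add: mult_ac)
  qed
  then show ?thesis using assms(4,5) by (simp add: mutual_bdd_iff[OF assms(3,2)])
qed

lemma mutual_bdd_distr:
  assumes "finite_measure \<mu>" "finite_measure \<nu>" "sets \<nu> = sets \<mu>"
    and f: "f \<in> measurable \<mu> N" and "mutual_bdd \<nu> \<mu> e"
  shows "mutual_bdd (distr \<nu> N f) (distr \<mu> N f) e"
proof -
  have f\<nu>: "f \<in> measurable \<nu> N" using f by (subst measurable_cong_sets[OF assms(3) refl])
  have "emeasure (distr \<nu> N f) A \<le> ennreal (1 + e) * emeasure (distr \<mu> N f) A \<and>
        emeasure (distr \<mu> N f) A \<le> ennreal (1 + e) * emeasure (distr \<nu> N f) A" if A: "A \<in> sets N" for A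
  proof -
    have "f -` A \<inter> space \<mu> \<in> sets \<mu>" using f A by (rule measurable_sets)
    moreover have "space \<nu> = space \<mu>" using assms(3) by (rule sets_eq_imp_space_eq)
    ultimately show ?thesis
      using assms(5) unfolding mutual_bdd_iff[OF assms(1-3)] emeasure_distr[OF f A] emeasure_distr[OF f\<nu> A]
      by simp
  qed
  moreover have "finite_measure (distr \<mu> N f)" "finite_measure (distr \<nu> N f)"
    using finite_measure.finite_measure_distr[OF assms(1) f] finite_measure.finite_measure_distr[OF assms(2) f\<nu>] .
  ultimately show ?thesis by (simp add: mutual_bdd_iff)
qed

lemma mutual_bdd_density:
  assumes "finite_measure M" "\<rho> \<in> borel_measurable M"
    and "\<And>x. \<rho> x \<le> ennreal (1 + e)" "AE x in M. 1 \<le> ennreal (1 + e) * \<rho> x"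
  shows "mutual_bdd (density M \<rho>) M e"
proof -
  interpret M: finite_measure M by fact
  have upper: "emeasure (density M \<rho>) A \<le> ennreal (1 + e) * emeasure M A" if "A \<in> sets M" for A
    using that assms(2,3) by (simp add: emeasure_density nn_integral_cmult_indicator[symmetric]
        mult_right_mono nn_integral_mono)
  have lower: "emeasure M A \<le> ennreal (1 + e) * emeasure (density M \<rho>) A" if "A \<in> sets M" for A
  proof -
    have "emeasure M A = (\<integral>\<^sup>+x. indicator A x \<partial>M)" using that by simp
    also have "\<dots> \<le> (\<integral>\<^sup>+x. ennreal (1 + e) * (\<rho> x * indicator A x) \<partial>M)"
      using assms(4) by (intro nn_integral_mono_AE) (auto elim!: eventually_mono simp: indicator_def)
    also have "\<dots> = ennreal (1 + e) * emeasure (density M \<rho>) A"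
      using that assms(2) by (simp add: nn_integral_cmult emeasure_density)
    finally show ?thesis .
  qed
  have "emeasure (density M \<rho>) (space M) \<le> ennreal (1 + e) * emeasure M (space M)"
    by (rule upper) simp
  then have "finite_measure (density M \<rho>)"
    by (intro finite_measureI) (auto simp: top_unique ennreal_mult_eq_top_iff M.emeasure_finite)
  then show ?thesis
    using upper lower by (subst mutual_bdd_iff) (auto simp: assms(1))
qed

lemma nn_integral_le_of_mutual_bdd:
  assumes "finite_measure \<mu>" "sets \<nu> = sets \<mu>" "mutual_bdd \<nu> \<mu> e" "f \<in> borel_measurable \<mu>"
  shows "(\<integral>\<^sup>+x. f x \<partial>\<nu>) \<le> ennreal (1 + e) * (\<integral>\<^sup>+x. f x \<partial>\<mu>)"
proof -
  interpret finite_measure \<mu> by fact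
  have "\<nu> = density \<mu> (RN_deriv \<mu> \<nu>)"
    using density_RN_deriv assms(2,3) unfolding mutual_bdd_def by metis
  then have "(\<integral>\<^sup>+x. f x \<partial>\<nu>) = (\<integral>\<^sup>+x. RN_deriv \<mu> \<nu> x * f x \<partial>\<mu>)"
    using assms(4) by (metis borel_measurable_RN_deriv nn_integral_density)
  also have "\<dots> \<le> (\<integral>\<^sup>+x. ennreal (1 + e) * f x \<partial>\<mu>)"
    using assms(3) unfolding mutual_bdd_def
    by (intro nn_integral_mono_AE) (auto elim!: eventually_mono intro: mult_right_mono)
  also have "\<dots> = ennreal (1 + e) * (\<integral>\<^sup>+x. f x \<partial>\<mu>)"
    using assms(4) by (rule nn_integral_cmult)
  finally show ?thesis .
qed

section \<open>Integral inequalities and product measures\<close>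

lemma powr_add_le_weighted:
  fixes u v l q :: real
  assumes u: "0 \<le> u" and v: "0 \<le> v" and l: "0 < l" "l < 1" and q: "1 \<le> q"
  shows "(u + v) powr q \<le> l powr (1 - q) * u powr q + (1 - l) powr (1 - q) * v powr q"
proof -
  have ge1: "1 \<le> x powr (1 - q)" if "0 < x" "x \<le> 1" for x :: real
  proof -
    have "x powr (q - 1) \<le> 1" "0 < x powr (q - 1)" using that q by (auto intro: powr_le1)
    moreover have "x powr (1 - q) = 1 / x powr (q - 1)" by (simp add: powr_minus_divide[symmetric])
    ultimately show ?thesis by simp
  qed
  have scale: "x * (y / x) powr q = x powr (1 - q) * y powr q" if "0 < x" "0 \<le> y" for x y :: real
    using that by (simp add: powr_divide powr_diff)
  consider "u = 0" | "v = 0" | "0 < u" "0 < v" using u v by linarith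
  then show ?thesis
  proof cases
    case 1
    have "1 * v powr q \<le> (1 - l) powr (1 - q) * v powr q"
      using ge1[of "1 - l"] l by (intro mult_right_mono) auto
    then show ?thesis using 1 by simp
  next
    case 2
    have "1 * u powr q \<le> l powr (1 - q) * u powr q"
      using ge1[of l] l by (intro mult_right_mono) auto
    then show ?thesis using 2 by simp
  next
    case 3
    have "(l * (u / l) + (1 - l) * (v / (1 - l))) powr q
        \<le> l * (u / l) powr q + (1 - l) * (v / (1 - l)) powr q"
      using convex_onD[OF powr_convex[OF q], of "1 - l" "u / l" "v / (1 - l)"] 3 l by simp
    then show ?thesis using l u v by (simp add: scale)
  qed
qed

lemma nn_integral_powr_add_le:
  assumes [measurable]: "f \<in> borel_measurable M" "g \<in> borel_measurable M"
    and nonneg: "\<And>x. 0 \<le> f x" "\<And>x. 0 \<le> g x" and q: "1 \<le> q" and pos: "0 < \<alpha>" "0 < \<beta>"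
    and f: "(\<integral>\<^sup>+x. ennreal (f x powr q) \<partial>M) \<le> ennreal (\<alpha> powr q)"
    and g: "(\<integral>\<^sup>+x. ennreal (g x powr q) \<partial>M) \<le> ennreal (\<beta> powr q)"
  shows "(\<integral>\<^sup>+x. ennreal ((f x + g x) powr q) \<partial>M) \<le> ennreal ((\<alpha> + \<beta>) powr q)"
proof -
  define S where "S = \<alpha> + \<beta>"
  have S: "0 < S" using pos unfolding S_def by simp
  define l where "l = \<alpha> / S"
  have l: "0 < l" "l < 1" "1 - l = \<beta> / S"
    using pos unfolding l_def S_def by (auto simp: field_simps)
  have weight: "(x / S) powr (1 - q) * x powr q = x * S powr (q - 1)" if "0 < x" for x
  proof -
    have "(x / S) powr (1 - q) * x powr q = (x powr (1 - q) * x powr q) * (1 / S powr (1 - q))"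
      using that S by (simp add: powr_divide)
    also have "x powr (1 - q) * x powr q = x" using that by (simp flip: powr_add)
    also have "1 / S powr (1 - q) = S powr (q - 1)" by (simp flip: powr_minus_divide)
    finally show ?thesis .
  qed
  have "(\<integral>\<^sup>+x. ennreal ((f x + g x) powr q) \<partial>M)
      \<le> (\<integral>\<^sup>+x. ennreal (l powr (1 - q)) * ennreal (f x powr q)
              + ennreal ((1 - l) powr (1 - q)) * ennreal (g x powr q) \<partial>M)"
    using powr_add_le_weighted[OF nonneg(1) nonneg(2) l(1,2) q]
    by (intro nn_integral_mono) (simp add: ennreal_mult[symmetric] ennreal_plus[symmetric] del: ennreal_plus)
  also have "\<dots> = ennreal (l powr (1 - q)) * (\<integral>\<^sup>+x. ennreal (f x powr q) \<partial>M)
      + ennreal ((1 - l) powr (1 - q)) * (\<integral>\<^sup>+x. ennreal (g x powr q) \<partial>M)"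
    by (simp add: nn_integral_add nn_integral_cmult)
  also have "\<dots> \<le> ennreal (l powr (1 - q)) * ennreal (\<alpha> powr q)
      + ennreal ((1 - l) powr (1 - q)) * ennreal (\<beta> powr q)"
    using f g by (intro add_mono mult_left_mono) auto
  also have "\<dots> = ennreal (\<alpha> * S powr (q - 1) + \<beta> * S powr (q - 1))"
    unfolding l(3) unfolding l_def using pos
    by (simp add: weight ennreal_mult[symmetric] ennreal_plus[symmetric] del: ennreal_plus)
  also have "\<alpha> * S powr (q - 1) + \<beta> * S powr (q - 1) = S powr q"
    using S unfolding S_def[symmetric] distrib_right[symmetric] by (simp add: powr_mult_base)
  finally show ?thesis unfolding S_def .
qed

lemma nn_integral_powr_add3_le:
  assumes [measurable]: "f \<in> borel_measurable M" "g \<in> borel_measurable M" "h \<in> borel_measurable M"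
    and nonneg: "\<And>x. 0 \<le> f x" "\<And>x. 0 \<le> g x" "\<And>x. 0 \<le> h x"
    and q: "1 \<le> q" and pos: "0 < \<alpha>" "0 < \<beta>" "0 < \<gamma>"
    and "(\<integral>\<^sup>+x. ennreal (f x powr q) \<partial>M) \<le> ennreal (\<alpha> powr q)"
    and "(\<integral>\<^sup>+x. ennreal (g x powr q) \<partial>M) \<le> ennreal (\<beta> powr q)"
    and "(\<integral>\<^sup>+x. ennreal (h x powr q) \<partial>M) \<le> ennreal (\<gamma> powr q)"
  shows "(\<integral>\<^sup>+x. ennreal ((f x + g x + h x) powr q) \<partial>M) \<le> ennreal ((\<alpha> + \<beta> + \<gamma>) powr q)"
  using nonneg pos
  by (intro nn_integral_powr_add_le[OF _ _ _ _ q _ _ nn_integral_powr_add_le[OF _ _ _ _ q]] assms)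
     (simp_all add: add_nonneg_nonneg)

lemma nn_integral_pair_map_le:
  assumes "sigma_finite_measure M" "sigma_finite_measure N" and f[measurable]: "f \<in> measurable M N"
    and dom: "\<And>g. g \<in> borel_measurable N \<Longrightarrow> (\<integral>\<^sup>+x. g (f x) \<partial>M) \<le> c * (\<integral>\<^sup>+y. g y \<partial>N)"
    and G[measurable]: "G \<in> borel_measurable (N \<Otimes>\<^sub>M N)"
  shows "(\<integral>\<^sup>+z. G (f (fst z), f (snd z)) \<partial>(M \<Otimes>\<^sub>M M)) \<le> c * c * (\<integral>\<^sup>+z. G z \<partial>(N \<Otimes>\<^sub>M N))"
proof -
  interpret M: sigma_finite_measure M by fact
  interpret N: sigma_finite_measure N by fact
  define H where "H y = (\<integral>\<^sup>+y'. G (y, y') \<partial>N)" for y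
  have [measurable]: "H \<in> borel_measurable N"
    unfolding H_def by (rule N.borel_measurable_nn_integral_fst[OF G])
  have "(\<integral>\<^sup>+z. G (f (fst z), f (snd z)) \<partial>(M \<Otimes>\<^sub>M M)) = (\<integral>\<^sup>+x. \<integral>\<^sup>+x'. G (f x, f x') \<partial>M \<partial>M)"
    by (subst M.nn_integral_fst[symmetric]) simp_all
  also have "\<dots> \<le> (\<integral>\<^sup>+x. c * H (f x) \<partial>M)"
    unfolding H_def by (intro nn_integral_mono dom) (simp add: measurable_space[OF f])
  also have "\<dots> = c * (\<integral>\<^sup>+x. H (f x) \<partial>M)"
    by (rule nn_integral_cmult) simp
  also have "\<dots> \<le> c * (c * (\<integral>\<^sup>+y. H y \<partial>N))"
    by (intro mult_left_mono dom) simp_all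
  also have "(\<integral>\<^sup>+y. H y \<partial>N) = (\<integral>\<^sup>+z. G z \<partial>(N \<Otimes>\<^sub>M N))"
    unfolding H_def by (rule N.nn_integral_fst[OF G])
  finally show ?thesis by (simp add: mult.assoc)
qed

lemma AE_pair_map_of_dominated:
  assumes "sigma_finite_measure M" "sigma_finite_measure N" and f[measurable]: "f \<in> measurable M N"
    and dom: "\<And>g. g \<in> borel_measurable N \<Longrightarrow> (\<integral>\<^sup>+x. g (f x) \<partial>M) \<le> c * (\<integral>\<^sup>+y. g y \<partial>N)"
    and P[measurable]: "Measurable.pred (N \<Otimes>\<^sub>M N) P" and AE: "AE z in N \<Otimes>\<^sub>M N. P z"
  shows "AE z in M \<Otimes>\<^sub>M M. P (f (fst z), f (snd z))"
proof -
  define S where "S = {z \<in> space (N \<Otimes>\<^sub>M N). \<not> P z}"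
  have S[measurable]: "S \<in> sets (N \<Otimes>\<^sub>M N)" unfolding S_def by measurable
  have "emeasure (N \<Otimes>\<^sub>M N) S = 0"
    using AE unfolding S_def by (subst (asm) AE_iff_measurable) auto
  then have "(\<integral>\<^sup>+z. indicator S (f (fst z), f (snd z)) \<partial>(M \<Otimes>\<^sub>M M)) = 0"
    using nn_integral_pair_map_le[OF assms(1-4), of "indicator S"] by simp
  then have "AE z in M \<Otimes>\<^sub>M M. indicator S (f (fst z), f (snd z)) = (0::ennreal)"
    by (subst (asm) nn_integral_0_iff_AE) simp_all
  then show ?thesis
    using AE_space
  proof eventually_elim
    case (elim z)
    then have "(f (fst z), f (snd z)) \<in> space (N \<Otimes>\<^sub>M N)"
      by (auto simp: space_pair_measure measurable_space[OF f])
    with elim(1) show ?case by (auto simp: S_def indicator_def split: if_splits)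
  qed
qed

lemma AE_pair_measure_fst:
  assumes "sigma_finite_measure N" "AE x in M. P x"
  shows "AE z in M \<Otimes>\<^sub>M N. P (fst z)"
proof -
  interpret N: sigma_finite_measure N by fact
  obtain A where A: "A \<in> null_sets M" "{x \<in> space M. \<not> P x} \<subseteq> A"
    using assms(2) by (auto elim!: AE_E)
  have "A \<times> space N \<in> null_sets (M \<Otimes>\<^sub>M N)"
    using A(1) by (simp add: null_sets_def N.emeasure_pair_measure_Times)
  then show ?thesis
    by (rule AE_I') (use A(2) in \<open>auto simp: space_pair_measure\<close>)
qed

lemma AE_pair_measure_snd:
  assumes "sigma_finite_measure N" "AE y in N. P y"
  shows "AE z in M \<Otimes>\<^sub>M N. P (snd z)"
proof -
  interpret N: sigma_finite_measure N by fact
  obtain A where A: "A \<in> null_sets N" "{y \<in> space N. \<not> P y} \<subseteq> A"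
    using assms(2) by (auto elim!: AE_E)
  have "space M \<times> A \<in> null_sets (M \<Otimes>\<^sub>M N)"
    using A(1) by (simp add: null_sets_def N.emeasure_pair_measure_Times)
  then show ?thesis
    by (rule AE_I') (use A(2) in \<open>auto simp: space_pair_measure\<close>)
qed

lemma distr_pair_snd:
  assumes "prob_space M" "sigma_finite_measure N"
  shows "distr (M \<Otimes>\<^sub>M N) N snd = N"
proof (rule measure_eqI)
  interpret N: sigma_finite_measure N by fact
  fix A assume A: "A \<in> sets (distr (M \<Otimes>\<^sub>M N) N snd)"
  then have "emeasure (distr (M \<Otimes>\<^sub>M N) N snd) A = emeasure (M \<Otimes>\<^sub>M N) (space M \<times> A)"
    by (auto simp: emeasure_distr space_pair_measure dest: sets.sets_into_space
        intro!: arg_cong2[where f = emeasure])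
  also have "\<dots> = emeasure N A"
    using A assms(1) by (simp add: N.emeasure_pair_measure_Times prob_space.emeasure_space_1)
  finally show "emeasure (distr (M \<Otimes>\<^sub>M N) N snd) A = emeasure N A" .
qed simp

section \<open>Distortion\<close>

lemma distortion_nonneg [simp]: "0 \<le> distortion z"
  by (simp add: distortion_def)

lemma distortion_bounded:
  assumes "compact (UNIV :: 'a::metric_space set)" "compact (UNIV :: 'b::metric_space set)"
  shows "\<exists>K. \<forall>z :: ('a \<times> 'b) \<times> ('a \<times> 'b). distortion z \<le> K"
proof -
  obtain Ka where Ka: "\<And>x y :: 'a. dist x y \<le> Ka"
    using compact_imp_bounded[OF assms(1)] by (auto simp: bounded_two_points)
  obtain Kb where Kb: "\<And>x y :: 'b. dist x y \<le> Kb"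
    using compact_imp_bounded[OF assms(2)] by (auto simp: bounded_two_points)
  have "distortion z \<le> Ka + Kb" for z :: "('a \<times> 'b) \<times> ('a \<times> 'b)"
    using Ka[of "fst (fst z)" "fst (snd z)"] Kb[of "snd (fst z)" "snd (snd z)"]
      zero_le_dist[of "fst (fst z)" "fst (snd z)"] zero_le_dist[of "snd (fst z)" "snd (snd z)"]
    unfolding distortion_def abs_le_iff by linarith
  then show ?thesis by blast
qed

lemma distortion_measurable:
  fixes \<pi> :: "('a::metric_space \<times> 'b::metric_space) measure"
  assumes "compact (UNIV :: 'a set)" "compact (UNIV :: 'b set)" "sets \<pi> = sets borel"
  shows "distortion \<in> borel_measurable (\<pi> \<Otimes>\<^sub>M \<pi>)"
proof -
  have "compact (UNIV :: ('a \<times> 'b) set)"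
    using compact_Times[OF assms(1,2)] by simp
  then have sets: "sets (\<pi> \<Otimes>\<^sub>M \<pi>) = sets (borel :: (('a \<times> 'b) \<times> ('a \<times> 'b)) measure)"
    using sets_pair_borel_compact sets_pair_measure_cong[OF assms(3) assms(3)] by metis
  have "distortion \<in> borel_measurable (borel :: (('a \<times> 'b) \<times> ('a \<times> 'b)) measure)"
    unfolding distortion_def[abs_def] by (intro borel_measurable_continuous_onI continuous_intros)
  then show ?thesis unfolding measurable_cong_sets[OF sets refl] .
qed

lemma distortion_comp_le:
  "distortion ((x, z), (x', z')) \<le>
     distortion ((x, y), (x', y')) + dist y v + dist y' v' + distortion ((v, z), (v', z'))"
proof -
  have "\<bar>dist y y' - dist v v'\<bar> \<le> dist y v + dist y' v'"
    using dist_triangle[of y y' v] dist_triangle[of v y' v'] dist_triangle[of v v' y]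
      dist_triangle[of y v' y'] by (simp add: dist_commute abs_le_iff)
  then show ?thesis unfolding distortion_def by simp
qed

lemma one_le_enn2real: "p \<noteq> \<top> \<Longrightarrow> 1 \<le> p \<Longrightarrow> 1 \<le> enn2real p"
  using enn2real_mono[of 1 p] by (simp add: top.not_eq_extremum)

lemma pfactor_powr:
  assumes "p \<noteq> \<top>" "1 \<le> p" "0 \<le> e"
  shows "pfactor p e powr enn2real p = (1 + e)\<^sup>2"
  using assms one_le_enn2real[OF assms(1,2)] by (simp add: pfactor_def powr_powr powr_numeral)

lemma pfactor_nonneg: "0 \<le> pfactor p e"
  by (simp add: pfactor_def)

lemma dis_norm_nonneg:
  assumes "prob_space \<pi>"
  shows "0 \<le> dis_norm p \<pi>"
proof -
  interpret prob_space "\<pi> \<Otimes>\<^sub>M \<pi>" by (rule prob_space_pair[OF assms assms])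
  have "0 \<le> esssup (\<pi> \<Otimes>\<^sub>M \<pi>) (\<lambda>z. ereal (distortion z))"
  proof (cases "(\<lambda>z. ereal (distortion z)) \<in> borel_measurable (\<pi> \<Otimes>\<^sub>M \<pi>)")
    case True
    then have "esssup (\<pi> \<Otimes>\<^sub>M \<pi>) (\<lambda>z. 0) \<le> esssup (\<pi> \<Otimes>\<^sub>M \<pi>) (\<lambda>z. ereal (distortion z))"
      by (intro esssup_mono) simp_all
    moreover have "esssup (\<pi> \<Otimes>\<^sub>M \<pi>) (\<lambda>z. 0 :: ereal) = 0"
      by (rule esssup_const) (simp add: emeasure_space_1)
    ultimately show ?thesis by simp
  qed (simp add: esssup_non_measurable)
  then show ?thesis by (simp add: dis_norm_def real_of_ereal_pos)
qed

lemma nn_integral_distortion_powr: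
  fixes \<pi> :: "('a::metric_space \<times> 'b::metric_space) measure"
  assumes "compact (UNIV :: 'a set)" "compact (UNIV :: 'b set)" "prob_space \<pi>"
    and "p \<noteq> \<top>" "1 \<le> p"
  shows "(\<integral>\<^sup>+z. ennreal (distortion z powr enn2real p) \<partial>(\<pi> \<Otimes>\<^sub>M \<pi>)) = ennreal (dis_norm p \<pi> powr enn2real p)"
proof -
  interpret prob_space "\<pi> \<Otimes>\<^sub>M \<pi>" by (rule prob_space_pair[OF assms(3) assms(3)])
  define q where "q = enn2real p"
  have q: "1 \<le> q" unfolding q_def by (rule one_le_enn2real[OF assms(4,5)])
  obtain K where K: "\<And>z :: ('a \<times> 'b) \<times> ('a \<times> 'b). distortion z \<le> K"
    using distortion_bounded[OF assms(1,2)] by blast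
  define I where "I = (\<integral>\<^sup>+z. ennreal (distortion z powr q) \<partial>(\<pi> \<Otimes>\<^sub>M \<pi>))"
  have "I \<le> (\<integral>\<^sup>+z. ennreal (K powr q) \<partial>(\<pi> \<Otimes>\<^sub>M \<pi>))"
    unfolding I_def using K q by (intro nn_integral_mono ennreal_leI powr_mono2) auto
  then have "I < \<top>" by (simp add: emeasure_space_1 le_less_trans)
  moreover have "dis_norm p \<pi> powr q = enn2real I"
    using assms(4) q unfolding dis_norm_def I_def q_def by (simp add: powr_powr)
  ultimately show ?thesis unfolding I_def q_def by simp
qed

lemma dis_norm_le_of_nn_integral:
  assumes "p \<noteq> \<top>" "1 \<le> p" "0 \<le> K"
    and "(\<integral>\<^sup>+z. ennreal (distortion z powr enn2real p) \<partial>(\<pi> \<Otimes>\<^sub>M \<pi>)) \<le> ennreal (K powr enn2real p)"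
  shows "dis_norm p \<pi> \<le> K"
proof -
  define q where "q = enn2real p"
  have q: "1 \<le> q" unfolding q_def by (rule one_le_enn2real[OF assms(1,2)])
  have "dis_norm p \<pi> = enn2real (\<integral>\<^sup>+z. ennreal (distortion z powr q) \<partial>(\<pi> \<Otimes>\<^sub>M \<pi>)) powr (1 / q)"
    using assms(1) unfolding dis_norm_def q_def by simp
  also have "\<dots> \<le> (K powr q) powr (1 / q)"
    using assms(4) q unfolding q_def by (intro powr_mono2 enn2real_leI) auto
  also have "\<dots> = K" using assms(3) q by (simp add: powr_powr)
  finally show ?thesis .
qed

lemma AE_distortion_le_dis_norm_top:
  fixes \<pi> :: "('a::metric_space \<times> 'b::metric_space) measure"
  assumes "compact (UNIV :: 'a set)" "compact (UNIV :: 'b set)" "sets \<pi> = sets borel"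
  shows "AE z in \<pi> \<Otimes>\<^sub>M \<pi>. distortion z \<le> dis_norm \<top> \<pi>"
proof -
  obtain K where "\<And>z :: ('a \<times> 'b) \<times> ('a \<times> 'b). distortion z \<le> K"
    using distortion_bounded[OF assms(1,2)] by blast
  then have "esssup (\<pi> \<Otimes>\<^sub>M \<pi>) (\<lambda>z. ereal (distortion z)) \<le> ereal K"
    using distortion_measurable[OF assms] by (intro esssup_I) auto
  then show ?thesis
    using esssup_AE[of "\<lambda>z. ereal (distortion z)" "\<pi> \<Otimes>\<^sub>M \<pi>"] unfolding dis_norm_def
    by (cases "esssup (\<pi> \<Otimes>\<^sub>M \<pi>) (\<lambda>z. ereal (distortion z))") (auto elim!: eventually_mono)
qed

lemma dis_norm_top_le:
  assumes "0 \<le> K" "AE z in \<pi> \<Otimes>\<^sub>M \<pi>. distortion z \<le> K"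
  shows "dis_norm \<top> \<pi> \<le> K"
proof (cases "(\<lambda>z. ereal (distortion z)) \<in> borel_measurable (\<pi> \<Otimes>\<^sub>M \<pi>)")
  case True
  then have "esssup (\<pi> \<Otimes>\<^sub>M \<pi>) (\<lambda>z. ereal (distortion z)) \<le> ereal K"
    using assms(2) by (intro esssup_I) auto
  then show ?thesis using assms(1) unfolding dis_norm_def
    by (cases "esssup (\<pi> \<Otimes>\<^sub>M \<pi>) (\<lambda>z. ereal (distortion z))") auto
qed (simp add: dis_norm_def esssup_non_measurable assms(1) top_ereal_def)

section \<open>Gluing two couplings along a partition\<close>

lemma measure_ratio_bounds:
  assumes "finite_measure \<mu>" "finite_measure \<nu>" "sets \<nu> = sets \<mu>" "mutual_bdd \<nu> \<mu> e"
    and "0 \<le> e" "A \<in> sets \<mu>"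
  shows "measure \<mu> A / measure \<nu> A \<le> 1 + e"
    and "0 < measure \<nu> A \<Longrightarrow> 1 \<le> (1 + e) * (measure \<mu> A / measure \<nu> A)"
    and "measure \<mu> A / measure \<nu> A * measure \<nu> A = measure \<mu> A"
  \<comment> \<open>also when \<open>\<nu> A = 0\<close>: then \<open>\<mu> A = 0\<close>, and \<open>x / 0 = 0\<close>\<close>
proof -
  interpret \<mu>: finite_measure \<mu> by fact
  interpret \<nu>: finite_measure \<nu> by fact
  have "ennreal (measure \<nu> A) \<le> ennreal ((1 + e) * measure \<mu> A)"
    and "ennreal (measure \<mu> A) \<le> ennreal ((1 + e) * measure \<nu> A)"
    using assms(4,5,6) unfolding mutual_bdd_iff[OF assms(1-3)]
    by (auto simp: \<mu>.emeasure_eq_measure \<nu>.emeasure_eq_measure[symmetric] assms(3) ennreal_mult)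
  then have le: "measure \<nu> A \<le> (1 + e) * measure \<mu> A" "measure \<mu> A \<le> (1 + e) * measure \<nu> A"
    using assms(5) by (simp_all add: ennreal_le_iff)
  show "measure \<mu> A / measure \<nu> A \<le> 1 + e"
    using le(2) assms(5) by (cases "measure \<nu> A = 0") (auto simp: divide_le_eq mult.commute)
  show "1 \<le> (1 + e) * (measure \<mu> A / measure \<nu> A)" if "0 < measure \<nu> A"
    using le(1) that by (simp add: le_divide_eq)
  show "measure \<mu> A / measure \<nu> A * measure \<nu> A = measure \<mu> A"
    using le(2) measure_nonneg[of \<mu> A] by (cases "measure \<nu> A = 0") auto
qed

definition cell_ratio :: "'a measure \<Rightarrow> 'a measure \<Rightarrow> nat \<Rightarrow> (nat \<Rightarrow> 'a set) \<Rightarrow> 'a \<Rightarrow> ennreal" where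
  "cell_ratio \<mu> \<nu> n B y = (\<Sum>i<n. ennreal (measure \<mu> (B i) / measure \<nu> (B i)) * indicator (B i) y)"

lemma cell_ratio_measurable [measurable]:
  assumes [measurable]: "\<And>i. B i \<in> sets M"
  shows "cell_ratio \<mu> \<nu> n B \<in> borel_measurable M"
  unfolding cell_ratio_def by measurable

lemma cell_ratio_cell:
  assumes "disjoint_family B" "j < n" "y \<in> B j"
  shows "cell_ratio \<mu> \<nu> n B y = ennreal (measure \<mu> (B j) / measure \<nu> (B j))"
proof -
  have "cell_ratio \<mu> \<nu> n B y = (\<Sum>i\<in>{j}. ennreal (measure \<mu> (B i) / measure \<nu> (B i)) * indicator (B i) y)"
    unfolding cell_ratio_def using assms
    by (intro sum.mono_neutral_right) (auto simp: disjoint_family_on_def indicator_def)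
  then show ?thesis using assms(3) by simp
qed

locale cell_partition =
  fixes \<mu> \<nu> :: "'a measure" and e :: real and n :: nat and B :: "nat \<Rightarrow> 'a set"
  assumes finite_\<mu>: "finite_measure \<mu>" and finite_\<nu>: "finite_measure \<nu>" and sets_eq: "sets \<nu> = sets \<mu>"
    and close: "mutual_bdd \<nu> \<mu> e" and e: "0 \<le> e"
    and B_sets: "\<And>i. B i \<in> sets \<mu>" and B_disjoint: "disjoint_family B" and B_cover: "\<And>y. \<exists>i<n. y \<in> B i"
begin

lemma cell_ratio_le: "cell_ratio \<mu> \<nu> n B y \<le> ennreal (1 + e)"
proof -
  obtain j where "j < n" "y \<in> B j" using B_cover by blast
  then show ?thesis
    using measure_ratio_bounds(1)[OF finite_\<mu> finite_\<nu> sets_eq close e B_sets]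
    by (simp add: cell_ratio_cell[OF B_disjoint] ennreal_leI)
qed

lemma AE_cell_ratio_ge: "AE y in \<nu>. 1 \<le> ennreal (1 + e) * cell_ratio \<mu> \<nu> n B y"
proof -
  interpret \<nu>: finite_measure \<nu> by (rule finite_\<nu>)
  have "AE y in \<nu>. \<forall>i\<in>{..<n}. y \<in> B i \<longrightarrow> measure \<nu> (B i) \<noteq> 0"
  proof (subst AE_finite_all)
    show "\<forall>i\<in>{..<n}. AE y in \<nu>. y \<in> B i \<longrightarrow> measure \<nu> (B i) \<noteq> 0"
    proof
      fix i
      show "AE y in \<nu>. y \<in> B i \<longrightarrow> measure \<nu> (B i) \<noteq> 0"
      proof (cases "measure \<nu> (B i) = 0")
        case True
        then have "B i \<in> null_sets \<nu>"
          using B_sets sets_eq by (simp add: null_sets_def \<nu>.emeasure_eq_measure)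
        from AE_not_in[OF this] show ?thesis by (rule eventually_mono) simp
      qed simp
    qed
  qed simp
  then show ?thesis
  proof eventually_elim
    case (elim y)
    obtain j where j: "j < n" "y \<in> B j" using B_cover by blast
    with elim have "0 < measure \<nu> (B j)" by (simp add: zero_less_measure_iff)
    then have "1 \<le> (1 + e) * (measure \<mu> (B j) / measure \<nu> (B j))"
      by (rule measure_ratio_bounds(2)[OF finite_\<mu> finite_\<nu> sets_eq close e B_sets])
    then have "ennreal 1 \<le> ennreal ((1 + e) * (measure \<mu> (B j) / measure \<nu> (B j)))"
      by (rule ennreal_leI)
    also have "\<dots> = ennreal (1 + e) * ennreal (measure \<mu> (B j) / measure \<nu> (B j))"
      using e by (intro ennreal_mult) auto
    finally show ?case
      unfolding cell_ratio_cell[OF B_disjoint j] by simp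
  qed
qed

lemma nn_integral_cell_ratio: "(\<integral>\<^sup>+y. cell_ratio \<mu> \<nu> n B y \<partial>\<nu>) = emeasure \<mu> (space \<mu>)"
proof -
  interpret \<mu>: finite_measure \<mu> by (rule finite_\<mu>)
  interpret \<nu>: finite_measure \<nu> by (rule finite_\<nu>)
  have "(\<integral>\<^sup>+y. cell_ratio \<mu> \<nu> n B y \<partial>\<nu>)
      = (\<Sum>i<n. ennreal (measure \<mu> (B i) / measure \<nu> (B i)) * emeasure \<nu> (B i))"
    unfolding cell_ratio_def using B_sets sets_eq
    by (subst nn_integral_sum) (auto simp: nn_integral_cmult_indicator)
  also have "\<dots> = (\<Sum>i<n. emeasure \<mu> (B i))"
    using measure_ratio_bounds(3)[OF finite_\<mu> finite_\<nu> sets_eq close e B_sets]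
    by (intro sum.cong refl)
       (simp add: \<nu>.emeasure_eq_measure \<mu>.emeasure_eq_measure ennreal_mult[symmetric])
  also have "\<dots> = emeasure \<mu> (\<Union>i<n. B i)"
    using B_sets B_disjoint
    by (intro sum_emeasure) (auto simp: disjoint_family_on_def)
  also have "(\<Union>i<n. B i) = space \<mu>"
    using B_cover sets.sets_into_space[OF B_sets] by blast
  finally show ?thesis .
qed

end

locale gluing =
  fixes \<pi>\<^sub>1 :: "('a::metric_space \<times> 'b::metric_space) measure"
    and \<pi>\<^sub>2 :: "('b \<times> 'c::metric_space) measure"
    and \<mu> :: "'b measure" and e\<^sub>1 e\<^sub>2 :: real and n :: nat and B :: "nat \<Rightarrow> 'b set"
  assumes prob_\<pi>\<^sub>1: "prob_space \<pi>\<^sub>1" and sets_\<pi>\<^sub>1: "sets \<pi>\<^sub>1 = sets borel"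
    and prob_\<pi>\<^sub>2: "prob_space \<pi>\<^sub>2" and sets_\<pi>\<^sub>2: "sets \<pi>\<^sub>2 = sets borel"
    and prob_\<mu>: "prob_space \<mu>" and sets_\<mu>: "sets \<mu> = sets borel"
    and e\<^sub>1: "0 \<le> e\<^sub>1" and e\<^sub>2: "0 \<le> e\<^sub>2"
    and marginal\<^sub>1: "mutual_bdd (distr \<pi>\<^sub>1 borel snd) \<mu> e\<^sub>2"
    and marginal\<^sub>2: "mutual_bdd (distr \<pi>\<^sub>2 borel fst) \<mu> e\<^sub>1"
    and B_borel [measurable]: "\<And>i. B i \<in> sets borel"
    and B_disjoint: "disjoint_family B" and B_cover: "\<And>y. \<exists>i<n. y \<in> B i"
begin

abbreviation "\<nu>\<^sub>1 \<equiv> distr \<pi>\<^sub>1 borel snd"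
abbreviation "\<nu>\<^sub>2 \<equiv> distr \<pi>\<^sub>2 borel fst"

sublocale \<pi>\<^sub>1: prob_space \<pi>\<^sub>1 by (rule prob_\<pi>\<^sub>1)
sublocale \<pi>\<^sub>2: prob_space \<pi>\<^sub>2 by (rule prob_\<pi>\<^sub>2)
sublocale \<pi>\<^sub>1\<pi>\<^sub>2: pair_prob_space \<pi>\<^sub>1 \<pi>\<^sub>2 ..

lemma measurable_components [measurable]:
  "fst \<in> borel_measurable \<pi>\<^sub>1" "snd \<in> borel_measurable \<pi>\<^sub>1"
  "fst \<in> borel_measurable \<pi>\<^sub>2" "snd \<in> borel_measurable \<pi>\<^sub>2"
  by (simp_all add: measurable_fst_snd_borel sets_\<pi>\<^sub>1 sets_\<pi>\<^sub>2)

sublocale cells\<^sub>1: cell_partition \<mu> \<nu>\<^sub>1 e\<^sub>2 n B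
  using prob_\<mu> \<pi>\<^sub>1.prob_space_distr[OF measurable_components(2)] marginal\<^sub>1 e\<^sub>2 B_disjoint B_cover sets_\<mu>
  by (intro cell_partition.intro) (simp_all add: prob_space_def)

sublocale cells\<^sub>2: cell_partition \<mu> \<nu>\<^sub>2 e\<^sub>1 n B
  using prob_\<mu> \<pi>\<^sub>2.prob_space_distr[OF measurable_components(3)] marginal\<^sub>2 e\<^sub>1 B_disjoint B_cover sets_\<mu>
  by (intro cell_partition.intro) (simp_all add: prob_space_def)

text \<open>Cells that are null for \<open>\<nu>\<^sub>1\<close> or \<open>\<nu>\<^sub>2\<close> are null for \<open>\<mu>\<close>, so the junk value
  \<open>x / 0 = 0\<close> of their weight is harmless.\<close>

definition weight :: "nat \<Rightarrow> real" where
  "weight i = measure \<mu> (B i) / (measure \<nu>\<^sub>1 (B i) * measure \<nu>\<^sub>2 (B i))"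

definition glue_density :: "('a \<times> 'b) \<times> ('b \<times> 'c) \<Rightarrow> ennreal" where
  "glue_density q =
     (\<Sum>i<n. ennreal (weight i) * indicator (B i) (snd (fst q)) * indicator (B i) (fst (snd q)))"

definition glued :: "(('a \<times> 'b) \<times> ('b \<times> 'c)) measure" where
  "glued = density (\<pi>\<^sub>1 \<Otimes>\<^sub>M \<pi>\<^sub>2) glue_density"

lemma glue_density_measurable [measurable]: "glue_density \<in> borel_measurable (\<pi>\<^sub>1 \<Otimes>\<^sub>M \<pi>\<^sub>2)"
  unfolding glue_density_def by measurable

lemma sets_glued [measurable_cong]: "sets glued = sets (\<pi>\<^sub>1 \<Otimes>\<^sub>M \<pi>\<^sub>2)"
  by (simp add: glued_def)

lemma measurable_glued_components [measurable]:
  "fst \<in> measurable glued borel" "snd \<in> measurable glued borel"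
proof -
  show "fst \<in> measurable glued borel"
    unfolding measurable_cong_sets[OF sets_glued sets_\<pi>\<^sub>1[symmetric]] by simp
  show "snd \<in> measurable glued borel"
    unfolding measurable_cong_sets[OF sets_glued sets_\<pi>\<^sub>2[symmetric]] by simp
qed

lemma weight_nonneg: "0 \<le> weight i"
  by (simp add: weight_def)

lemma weight_mult_measure:
  "weight i * measure \<nu>\<^sub>2 (B i) = measure \<mu> (B i) / measure \<nu>\<^sub>1 (B i)"
  "weight i * measure \<nu>\<^sub>1 (B i) = measure \<mu> (B i) / measure \<nu>\<^sub>2 (B i)"
  using measure_ratio_bounds(3)[OF cells\<^sub>1.finite_\<mu> cells\<^sub>1.finite_\<nu> cells\<^sub>1.sets_eq marginal\<^sub>1 e\<^sub>2, of "B i"]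
    measure_ratio_bounds(3)[OF cells\<^sub>2.finite_\<mu> cells\<^sub>2.finite_\<nu> cells\<^sub>2.sets_eq marginal\<^sub>2 e\<^sub>1, of "B i"]
  by (auto simp: weight_def sets_\<mu>)

lemma nn_integral_indicator_cell:
  "(\<integral>\<^sup>+p. indicator (B i) (snd p) \<partial>\<pi>\<^sub>1) = ennreal (measure \<nu>\<^sub>1 (B i))"
  "(\<integral>\<^sup>+r. indicator (B i) (fst r) \<partial>\<pi>\<^sub>2) = ennreal (measure \<nu>\<^sub>2 (B i))"
proof -
  have "(\<integral>\<^sup>+p. indicator (B i) (snd p) \<partial>\<pi>\<^sub>1) = (\<integral>\<^sup>+y. indicator (B i) y \<partial>\<nu>\<^sub>1)"
    by (rule nn_integral_distr[symmetric]) simp_all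
  also have "\<dots> = emeasure \<nu>\<^sub>1 (B i)" by simp
  finally have "(\<integral>\<^sup>+p. indicator (B i) (snd p) \<partial>\<pi>\<^sub>1) = emeasure \<nu>\<^sub>1 (B i)" .
  then show "(\<integral>\<^sup>+p. indicator (B i) (snd p) \<partial>\<pi>\<^sub>1) = ennreal (measure \<nu>\<^sub>1 (B i))"
    using cells\<^sub>1.finite_\<nu> by (simp add: finite_measure.emeasure_eq_measure)
  have "(\<integral>\<^sup>+r. indicator (B i) (fst r) \<partial>\<pi>\<^sub>2) = (\<integral>\<^sup>+y. indicator (B i) y \<partial>\<nu>\<^sub>2)"
    by (rule nn_integral_distr[symmetric]) simp_all
  also have "\<dots> = emeasure \<nu>\<^sub>2 (B i)" by simp
  finally have "(\<integral>\<^sup>+r. indicator (B i) (fst r) \<partial>\<pi>\<^sub>2) = emeasure \<nu>\<^sub>2 (B i)" .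
  then show "(\<integral>\<^sup>+r. indicator (B i) (fst r) \<partial>\<pi>\<^sub>2) = ennreal (measure \<nu>\<^sub>2 (B i))"
    using cells\<^sub>2.finite_\<nu> by (simp add: finite_measure.emeasure_eq_measure)
qed

lemma nn_integral_glued_fst:
  assumes [measurable]: "g \<in> borel_measurable \<pi>\<^sub>1"
  shows "(\<integral>\<^sup>+q. g (fst q) \<partial>glued) = (\<integral>\<^sup>+p. cell_ratio \<mu> \<nu>\<^sub>1 n B (snd p) * g p \<partial>\<pi>\<^sub>1)"
proof -
  have "(\<integral>\<^sup>+q. g (fst q) \<partial>glued) = (\<integral>\<^sup>+p. \<integral>\<^sup>+r. glue_density (p, r) * g p \<partial>\<pi>\<^sub>2 \<partial>\<pi>\<^sub>1)"
    unfolding glued_def by (simp add: nn_integral_density \<pi>\<^sub>2.nn_integral_fst[symmetric])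
  also have "\<dots> = (\<integral>\<^sup>+p. cell_ratio \<mu> \<nu>\<^sub>1 n B (snd p) * g p \<partial>\<pi>\<^sub>1)"
  proof (intro nn_integral_cong)
    fix p
    have "(\<integral>\<^sup>+r. glue_density (p, r) \<partial>\<pi>\<^sub>2)
        = (\<Sum>i<n. \<integral>\<^sup>+r. ennreal (weight i) * indicator (B i) (snd p) * indicator (B i) (fst r) \<partial>\<pi>\<^sub>2)"
      unfolding glue_density_def fst_conv snd_conv by (rule nn_integral_sum) simp
    also have "\<dots> = (\<Sum>i<n. ennreal (weight i) * indicator (B i) (snd p) * ennreal (measure \<nu>\<^sub>2 (B i)))"
      by (intro sum.cong refl) (simp add: nn_integral_cmult nn_integral_indicator_cell)
    also have "\<dots> = cell_ratio \<mu> \<nu>\<^sub>1 n B (snd p)"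
      unfolding cell_ratio_def weight_mult_measure(1)[symmetric]
      by (simp add: ennreal_mult weight_nonneg mult_ac)
    moreover have "(\<integral>\<^sup>+r. glue_density (p, r) * g p \<partial>\<pi>\<^sub>2) = (\<integral>\<^sup>+r. glue_density (p, r) \<partial>\<pi>\<^sub>2) * g p"
      by (rule nn_integral_multc) (simp only: glue_density_def fst_conv snd_conv, measurable)
    ultimately show "(\<integral>\<^sup>+r. glue_density (p, r) * g p \<partial>\<pi>\<^sub>2) = cell_ratio \<mu> \<nu>\<^sub>1 n B (snd p) * g p"
      by simp
  qed
  finally show ?thesis .
qed

lemma nn_integral_glued_snd:
  assumes [measurable]: "g \<in> borel_measurable \<pi>\<^sub>2"
  shows "(\<integral>\<^sup>+q. g (snd q) \<partial>glued) = (\<integral>\<^sup>+r. cell_ratio \<mu> \<nu>\<^sub>2 n B (fst r) * g r \<partial>\<pi>\<^sub>2)"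
proof -
  have "(\<integral>\<^sup>+q. g (snd q) \<partial>glued) = (\<integral>\<^sup>+r. \<integral>\<^sup>+p. glue_density (p, r) * g r \<partial>\<pi>\<^sub>1 \<partial>\<pi>\<^sub>2)"
    unfolding glued_def
    by (simp add: nn_integral_density \<pi>\<^sub>1\<pi>\<^sub>2.nn_integral_snd[of "\<lambda>q. glue_density q * g (snd q)", symmetric])
  also have "\<dots> = (\<integral>\<^sup>+r. cell_ratio \<mu> \<nu>\<^sub>2 n B (fst r) * g r \<partial>\<pi>\<^sub>2)"
  proof (intro nn_integral_cong)
    fix r
    have "(\<integral>\<^sup>+p. glue_density (p, r) \<partial>\<pi>\<^sub>1)
        = (\<Sum>i<n. \<integral>\<^sup>+p. ennreal (weight i) * indicator (B i) (fst r) * indicator (B i) (snd p) \<partial>\<pi>\<^sub>1)"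
      unfolding glue_density_def fst_conv snd_conv
      by (subst nn_integral_sum) (simp_all add: mult_ac)
    also have "\<dots> = (\<Sum>i<n. ennreal (weight i) * indicator (B i) (fst r) * ennreal (measure \<nu>\<^sub>1 (B i)))"
      by (intro sum.cong refl) (simp add: nn_integral_cmult nn_integral_indicator_cell)
    also have "\<dots> = cell_ratio \<mu> \<nu>\<^sub>2 n B (fst r)"
      unfolding cell_ratio_def weight_mult_measure(2)[symmetric]
      by (simp add: ennreal_mult weight_nonneg mult_ac)
    moreover have "(\<integral>\<^sup>+p. glue_density (p, r) * g r \<partial>\<pi>\<^sub>1) = (\<integral>\<^sup>+p. glue_density (p, r) \<partial>\<pi>\<^sub>1) * g r"
      by (rule nn_integral_multc) (simp only: glue_density_def fst_conv snd_conv, measurable)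
    ultimately show "(\<integral>\<^sup>+p. glue_density (p, r) * g r \<partial>\<pi>\<^sub>1) = cell_ratio \<mu> \<nu>\<^sub>2 n B (fst r) * g r"
      by simp
  qed
  finally show ?thesis .
qed

lemma distr_glued_fst: "distr glued borel fst = density \<pi>\<^sub>1 (\<lambda>p. cell_ratio \<mu> \<nu>\<^sub>1 n B (snd p))"
proof (rule measure_eqI)
  fix A assume "A \<in> sets (distr glued borel fst)"
  then have [measurable]: "A \<in> sets borel" by simp
  have "emeasure (distr glued borel fst) A = (\<integral>\<^sup>+x. indicator A x \<partial>distr glued borel fst)"
    by simp
  also have "\<dots> = (\<integral>\<^sup>+q. indicator A (fst q) \<partial>glued)"
    by (rule nn_integral_distr) simp_all
  also have "\<dots> = (\<integral>\<^sup>+p. cell_ratio \<mu> \<nu>\<^sub>1 n B (snd p) * indicator A p \<partial>\<pi>\<^sub>1)"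
    by (intro nn_integral_glued_fst borel_measurable_indicator) (simp add: sets_\<pi>\<^sub>1)
  also have "\<dots> = emeasure (density \<pi>\<^sub>1 (\<lambda>p. cell_ratio \<mu> \<nu>\<^sub>1 n B (snd p))) A"
    by (simp add: emeasure_density sets_\<pi>\<^sub>1)
  finally show "emeasure (distr glued borel fst) A = emeasure (density \<pi>\<^sub>1 (\<lambda>p. cell_ratio \<mu> \<nu>\<^sub>1 n B (snd p))) A" .
qed (simp add: sets_\<pi>\<^sub>1)

lemma distr_glued_snd: "distr glued borel snd = density \<pi>\<^sub>2 (\<lambda>r. cell_ratio \<mu> \<nu>\<^sub>2 n B (fst r))"
proof (rule measure_eqI)
  fix A assume "A \<in> sets (distr glued borel snd)"
  then have [measurable]: "A \<in> sets borel" by simp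
  have "emeasure (distr glued borel snd) A = (\<integral>\<^sup>+x. indicator A x \<partial>distr glued borel snd)"
    by simp
  also have "\<dots> = (\<integral>\<^sup>+q. indicator A (snd q) \<partial>glued)"
    by (rule nn_integral_distr) simp_all
  also have "\<dots> = (\<integral>\<^sup>+r. cell_ratio \<mu> \<nu>\<^sub>2 n B (fst r) * indicator A r \<partial>\<pi>\<^sub>2)"
    by (intro nn_integral_glued_snd borel_measurable_indicator) (simp add: sets_\<pi>\<^sub>2)
  also have "\<dots> = emeasure (density \<pi>\<^sub>2 (\<lambda>r. cell_ratio \<mu> \<nu>\<^sub>2 n B (fst r))) A"
    by (simp add: emeasure_density sets_\<pi>\<^sub>2)
  finally show "emeasure (distr glued borel snd) A = emeasure (density \<pi>\<^sub>2 (\<lambda>r. cell_ratio \<mu> \<nu>\<^sub>2 n B (fst r))) A" .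
qed (simp add: sets_\<pi>\<^sub>2)

lemma prob_space_glued: "prob_space glued"
proof (rule prob_spaceI)
  have "emeasure glued (space glued) = (\<integral>\<^sup>+q. (\<lambda>_. 1) (fst q) \<partial>glued)"
    by (simp add: nn_integral_const)
  also have "\<dots> = (\<integral>\<^sup>+p. cell_ratio \<mu> \<nu>\<^sub>1 n B (snd p) \<partial>\<pi>\<^sub>1)"
    by (subst nn_integral_glued_fst) simp_all
  also have "\<dots> = (\<integral>\<^sup>+y. cell_ratio \<mu> \<nu>\<^sub>1 n B y \<partial>\<nu>\<^sub>1)"
    by (rule nn_integral_distr[symmetric]) simp_all
  also have "\<dots> = 1"
    using prob_\<mu> by (simp add: cells\<^sub>1.nn_integral_cell_ratio prob_space.emeasure_space_1)
  finally show "emeasure glued (space glued) = 1" .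
qed

lemma mutual_bdd_glued_fst: "mutual_bdd (distr glued borel fst) \<pi>\<^sub>1 e\<^sub>2"
  unfolding distr_glued_fst
proof (rule mutual_bdd_density)
  show "finite_measure \<pi>\<^sub>1" by unfold_locales
  show "AE p in \<pi>\<^sub>1. 1 \<le> ennreal (1 + e\<^sub>2) * cell_ratio \<mu> \<nu>\<^sub>1 n B (snd p)"
    using cells\<^sub>1.AE_cell_ratio_ge by (simp add: AE_distr_iff)
qed (simp_all add: cells\<^sub>1.cell_ratio_le)

lemma mutual_bdd_glued_snd: "mutual_bdd (distr glued borel snd) \<pi>\<^sub>2 e\<^sub>1"
  unfolding distr_glued_snd
proof (rule mutual_bdd_density)
  show "finite_measure \<pi>\<^sub>2" by unfold_locales
  show "AE r in \<pi>\<^sub>2. 1 \<le> ennreal (1 + e\<^sub>1) * cell_ratio \<mu> \<nu>\<^sub>2 n B (fst r)"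
    using cells\<^sub>2.AE_cell_ratio_ge by (simp add: AE_distr_iff)
qed (simp_all add: cells\<^sub>2.cell_ratio_le)

lemma AE_glued_same_cell: "AE q in glued. \<exists>i<n. snd (fst q) \<in> B i \<and> fst (snd q) \<in> B i"
proof -
  have "AE q in \<pi>\<^sub>1 \<Otimes>\<^sub>M \<pi>\<^sub>2. glue_density q \<noteq> 0 \<longrightarrow> (\<exists>i<n. snd (fst q) \<in> B i \<and> fst (snd q) \<in> B i)"
    by (intro AE_I2) (auto simp: glue_density_def indicator_def elim!: sum.not_neutral_contains_not_neutral)
  then show ?thesis
    unfolding glued_def by (subst AE_density) (auto elim!: eventually_mono)
qed

end

lemma glued_coupling_exists:
  fixes \<pi>\<^sub>1 :: "('a::metric_space \<times> 'b::metric_space) measure"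
    and \<pi>\<^sub>2 :: "('b \<times> 'c::metric_space) measure" and \<mu> :: "'b measure"
  assumes "compact (UNIV :: 'b set)" "0 < \<delta>"
    and "prob_space \<pi>\<^sub>1" "sets \<pi>\<^sub>1 = sets borel" "prob_space \<pi>\<^sub>2" "sets \<pi>\<^sub>2 = sets borel"
    and "prob_space \<mu>" "sets \<mu> = sets borel" "0 \<le> e\<^sub>1" "0 \<le> e\<^sub>2"
    and "mutual_bdd (distr \<pi>\<^sub>1 borel snd) \<mu> e\<^sub>2" "mutual_bdd (distr \<pi>\<^sub>2 borel fst) \<mu> e\<^sub>1"
  obtains \<Gamma> where "prob_space \<Gamma>" "sets \<Gamma> = sets (\<pi>\<^sub>1 \<Otimes>\<^sub>M \<pi>\<^sub>2)"
    "mutual_bdd (distr \<Gamma> borel fst) \<pi>\<^sub>1 e\<^sub>2" "mutual_bdd (distr \<Gamma> borel snd) \<pi>\<^sub>2 e\<^sub>1"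
    "AE q in \<Gamma>. dist (snd (fst q)) (fst (snd q)) \<le> \<delta>"
proof -
  obtain n and B :: "nat \<Rightarrow> 'b set" where B: "\<And>i. B i \<in> sets borel" "disjoint_family B"
    "\<And>y. \<exists>i<n. y \<in> B i" "\<And>i y y'. y \<in> B i \<Longrightarrow> y' \<in> B i \<Longrightarrow> dist y y' \<le> \<delta>"
    using compact_metric_finite_partition[OF assms(1,2)] by metis
  interpret gluing \<pi>\<^sub>1 \<pi>\<^sub>2 \<mu> e\<^sub>1 e\<^sub>2 n B
    using assms(3-) B(1-3) by (rule gluing.intro)
  have "AE q in glued. dist (snd (fst q)) (fst (snd q)) \<le> \<delta>"
    using AE_glued_same_cell by eventually_elim (use B(4) in blast)
  with prob_space_glued sets_glued mutual_bdd_glued_fst mutual_bdd_glued_snd show ?thesis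
    by (rule that)
qed

section \<open>Composing couplings\<close>

locale coupling_composition =
  fixes \<pi>\<^sub>1 :: "('a::metric_space \<times> 'b::metric_space) measure"
    and \<pi>\<^sub>2 :: "('b \<times> 'c::metric_space) measure"
    and \<Gamma> :: "(('a \<times> 'b) \<times> ('b \<times> 'c)) measure" and e\<^sub>1 e\<^sub>2 \<delta> :: real
  assumes compact_X: "compact (UNIV :: 'a set)" and compact_Y: "compact (UNIV :: 'b set)"
    and compact_Z: "compact (UNIV :: 'c set)"
    and prob_\<pi>\<^sub>1: "prob_space \<pi>\<^sub>1" and sets_\<pi>\<^sub>1: "sets \<pi>\<^sub>1 = sets borel"
    and prob_\<pi>\<^sub>2: "prob_space \<pi>\<^sub>2" and sets_\<pi>\<^sub>2: "sets \<pi>\<^sub>2 = sets borel"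
    and prob_\<Gamma>: "prob_space \<Gamma>" and sets_\<Gamma> [measurable_cong]: "sets \<Gamma> = sets (\<pi>\<^sub>1 \<Otimes>\<^sub>M \<pi>\<^sub>2)"
    and e\<^sub>1: "0 \<le> e\<^sub>1" and e\<^sub>2: "0 \<le> e\<^sub>2" and \<delta>: "0 < \<delta>"
    and close_fst: "mutual_bdd (distr \<Gamma> borel fst) \<pi>\<^sub>1 e\<^sub>2"
    and close_snd: "mutual_bdd (distr \<Gamma> borel snd) \<pi>\<^sub>2 e\<^sub>1"
    and linked: "AE q in \<Gamma>. dist (snd (fst q)) (fst (snd q)) \<le> \<delta>"
begin

sublocale \<pi>\<^sub>1: prob_space \<pi>\<^sub>1 by (rule prob_\<pi>\<^sub>1)
sublocale \<pi>\<^sub>2: prob_space \<pi>\<^sub>2 by (rule prob_\<pi>\<^sub>2)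
sublocale \<Gamma>: prob_space \<Gamma> by (rule prob_\<Gamma>)
sublocale \<Gamma>\<Gamma>: pair_prob_space \<Gamma> \<Gamma> ..

definition outer :: "('a \<times> 'b) \<times> ('b \<times> 'c) \<Rightarrow> 'a \<times> 'c" where
  "outer q = (fst (fst q), snd (snd q))"

definition composed :: "('a \<times> 'c) measure" where
  "composed = distr \<Gamma> borel outer"

lemma measurable_components [measurable]:
  "fst \<in> borel_measurable \<pi>\<^sub>1" "snd \<in> borel_measurable \<pi>\<^sub>1"
  "fst \<in> borel_measurable \<pi>\<^sub>2" "snd \<in> borel_measurable \<pi>\<^sub>2"
  by (simp_all add: measurable_fst_snd_borel sets_\<pi>\<^sub>1 sets_\<pi>\<^sub>2)

lemma measurable_coupling_components [measurable]:
  "fst \<in> measurable \<Gamma> \<pi>\<^sub>1" "snd \<in> measurable \<Gamma> \<pi>\<^sub>2"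
  "fst \<in> measurable \<Gamma> borel" "snd \<in> measurable \<Gamma> borel"
  by (simp_all add: measurable_cong_sets[OF sets_\<Gamma> refl] measurable_cong_sets[OF refl sets_\<pi>\<^sub>1[symmetric]]
      measurable_cong_sets[OF refl sets_\<pi>\<^sub>2[symmetric]])

lemma measurable_distortion [measurable]:
  "distortion \<in> borel_measurable (\<pi>\<^sub>1 \<Otimes>\<^sub>M \<pi>\<^sub>1)" "distortion \<in> borel_measurable (\<pi>\<^sub>2 \<Otimes>\<^sub>M \<pi>\<^sub>2)"
  "distortion \<in> borel_measurable (borel \<Otimes>\<^sub>M borel :: (('a \<times> 'c) \<times> ('a \<times> 'c)) measure)"
  by (intro distortion_measurable compact_X compact_Y compact_Z sets_\<pi>\<^sub>1 sets_\<pi>\<^sub>2 refl)+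

lemma measurable_outer [measurable]: "outer \<in> measurable \<Gamma> borel"
proof -
  have "outer \<in> measurable \<Gamma> (borel \<Otimes>\<^sub>M borel)"
    unfolding outer_def by measurable
  then show ?thesis
    unfolding measurable_cong_sets[OF refl sets_pair_borel_compact[OF compact_X compact_Z]] .
qed

lemma prob_space_composed: "prob_space composed"
  unfolding composed_def by (rule \<Gamma>.prob_space_distr) simp

lemma sets_composed: "sets composed = sets borel"
  by (simp add: composed_def)

lemma nn_integral_fst_le:
  assumes "g \<in> borel_measurable \<pi>\<^sub>1"
  shows "(\<integral>\<^sup>+q. g (fst q) \<partial>\<Gamma>) \<le> ennreal (1 + e\<^sub>2) * (\<integral>\<^sup>+p. g p \<partial>\<pi>\<^sub>1)"
proof -
  have [measurable]: "g \<in> borel_measurable borel"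
    using assms by (simp add: measurable_cong_sets[OF sets_\<pi>\<^sub>1 refl])
  have "(\<integral>\<^sup>+q. g (fst q) \<partial>\<Gamma>) = (\<integral>\<^sup>+p. g p \<partial>distr \<Gamma> borel fst)"
    by (rule nn_integral_distr[symmetric]) simp_all
  also have "\<dots> \<le> ennreal (1 + e\<^sub>2) * (\<integral>\<^sup>+p. g p \<partial>\<pi>\<^sub>1)"
    by (rule nn_integral_le_of_mutual_bdd[OF _ _ close_fst assms]) (simp_all add: sets_\<pi>\<^sub>1 \<pi>\<^sub>1.finite_measure_axioms)
  finally show ?thesis .
qed

lemma nn_integral_snd_le:
  assumes "g \<in> borel_measurable \<pi>\<^sub>2"
  shows "(\<integral>\<^sup>+q. g (snd q) \<partial>\<Gamma>) \<le> ennreal (1 + e\<^sub>1) * (\<integral>\<^sup>+r. g r \<partial>\<pi>\<^sub>2)"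
proof -
  have [measurable]: "g \<in> borel_measurable borel"
    using assms by (simp add: measurable_cong_sets[OF sets_\<pi>\<^sub>2 refl])
  have "(\<integral>\<^sup>+q. g (snd q) \<partial>\<Gamma>) = (\<integral>\<^sup>+r. g r \<partial>distr \<Gamma> borel snd)"
    by (rule nn_integral_distr[symmetric]) simp_all
  also have "\<dots> \<le> ennreal (1 + e\<^sub>1) * (\<integral>\<^sup>+r. g r \<partial>\<pi>\<^sub>2)"
    by (rule nn_integral_le_of_mutual_bdd[OF _ _ close_snd assms]) (simp_all add: sets_\<pi>\<^sub>2 \<pi>\<^sub>2.finite_measure_axioms)
  finally show ?thesis .
qed

lemma distr_composed_fst: "distr composed borel fst = distr (distr \<Gamma> borel fst) borel fst"
proof -
  have "distr composed borel fst = distr \<Gamma> borel (fst \<circ> outer)"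
    unfolding composed_def by (rule distr_distr) (simp_all add: measurable_fst_snd_borel)
  also have "\<dots> = distr (distr \<Gamma> borel fst) borel fst"
    by (subst distr_distr) (simp_all add: measurable_fst_snd_borel comp_def outer_def)
  finally show ?thesis .
qed

lemma distr_composed_snd: "distr composed borel snd = distr (distr \<Gamma> borel snd) borel snd"
proof -
  have "distr composed borel snd = distr \<Gamma> borel (snd \<circ> outer)"
    unfolding composed_def by (rule distr_distr) (simp_all add: measurable_fst_snd_borel)
  also have "\<dots> = distr (distr \<Gamma> borel snd) borel snd"
    by (subst distr_distr) (simp_all add: measurable_fst_snd_borel comp_def outer_def)
  finally show ?thesis .
qed

lemma composed_in_sS:
  assumes "\<pi>\<^sub>1 \<in> sS e\<^sub>1 e\<^sub>2 \<mu>\<^sub>X \<mu>\<^sub>Y" "\<pi>\<^sub>2 \<in> sS e\<^sub>1 e\<^sub>2 \<mu>\<^sub>Y \<mu>\<^sub>Z"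
    and "prob_space \<mu>\<^sub>X" "sets \<mu>\<^sub>X = sets borel" "prob_space \<mu>\<^sub>Z" "sets \<mu>\<^sub>Z = sets borel"
  shows "composed \<in> sS (e\<^sub>1 + e\<^sub>2 + e\<^sub>1 * e\<^sub>2) (e\<^sub>1 + e\<^sub>2 + e\<^sub>1 * e\<^sub>2) \<mu>\<^sub>X \<mu>\<^sub>Z"
proof -
  have fm: "finite_measure \<mu>\<^sub>X" "finite_measure \<mu>\<^sub>Z"
    using assms(3,5) by (simp_all add: prob_space_def)
  have fm_fst: "finite_measure (distr \<pi>\<^sub>1 borel fst)" "finite_measure (distr \<Gamma> borel fst)"
    "finite_measure (distr (distr \<Gamma> borel fst) borel fst)"
    by (intro finite_measure.finite_measure_distr \<pi>\<^sub>1.finite_measure_axioms \<Gamma>.finite_measure_axioms;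
        simp add: measurable_fst_snd_borel)+
  have fm_snd: "finite_measure (distr \<pi>\<^sub>2 borel snd)" "finite_measure (distr \<Gamma> borel snd)"
    "finite_measure (distr (distr \<Gamma> borel snd) borel snd)"
    by (intro finite_measure.finite_measure_distr \<pi>\<^sub>2.finite_measure_axioms \<Gamma>.finite_measure_axioms;
        simp add: measurable_fst_snd_borel)+
  have "mutual_bdd (distr (distr \<Gamma> borel fst) borel fst) (distr \<pi>\<^sub>1 borel fst) e\<^sub>2"
    by (rule mutual_bdd_distr[OF \<pi>\<^sub>1.finite_measure_axioms fm_fst(2) _ _ close_fst])
       (simp_all add: sets_\<pi>\<^sub>1)
  moreover have "mutual_bdd (distr \<pi>\<^sub>1 borel fst) \<mu>\<^sub>X e\<^sub>1"
    using assms(1) by (simp add: sS_def)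
  ultimately have X: "mutual_bdd (distr composed borel fst) \<mu>\<^sub>X (e\<^sub>2 + e\<^sub>1 + e\<^sub>2 * e\<^sub>1)"
    unfolding distr_composed_fst
    by (intro mutual_bdd_trans[OF fm_fst(1) fm_fst(3) fm(1)] e\<^sub>1 e\<^sub>2) (simp_all add: assms(4))
  have "mutual_bdd (distr (distr \<Gamma> borel snd) borel snd) (distr \<pi>\<^sub>2 borel snd) e\<^sub>1"
    by (rule mutual_bdd_distr[OF \<pi>\<^sub>2.finite_measure_axioms fm_snd(2) _ _ close_snd])
       (simp_all add: sets_\<pi>\<^sub>2)
  moreover have "mutual_bdd (distr \<pi>\<^sub>2 borel snd) \<mu>\<^sub>Z e\<^sub>2"
    using assms(2) by (simp add: sS_def)
  ultimately have Z: "mutual_bdd (distr composed borel snd) \<mu>\<^sub>Z (e\<^sub>1 + e\<^sub>2 + e\<^sub>1 * e\<^sub>2)"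
    unfolding distr_composed_snd
    by (intro mutual_bdd_trans[OF fm_snd(1) fm_snd(3) fm(2)] e\<^sub>1 e\<^sub>2) (simp_all add: assms(6))
  from X Z show ?thesis
    using prob_space_composed sets_composed by (simp add: sS_def algebra_simps)
qed

lemma AE_distortion_outer_le:
  "AE z in \<Gamma> \<Otimes>\<^sub>M \<Gamma>. distortion (outer (fst z), outer (snd z))
     \<le> distortion (fst (fst z), fst (snd z)) + 2 * \<delta> + distortion (snd (fst z), snd (snd z))"
  using AE_pair_measure_fst[OF \<Gamma>.sigma_finite_measure_axioms linked]
    AE_pair_measure_snd[OF \<Gamma>.sigma_finite_measure_axioms linked]
proof eventually_elim
  case (elim z)
  then show ?case
    using distortion_comp_le[of "fst (fst (fst z))" "snd (snd (fst z))" "fst (fst (snd z))"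
        "snd (snd (snd z))" "snd (fst (fst z))" "snd (fst (snd z))" "fst (snd (fst z))" "fst (snd (snd z))"]
    by (simp add: outer_def)
qed

lemma composed_pair_measure:
  "composed \<Otimes>\<^sub>M composed = distr (\<Gamma> \<Otimes>\<^sub>M \<Gamma>) (borel \<Otimes>\<^sub>M borel) (\<lambda>(q, q'). (outer q, outer q'))"
  unfolding composed_def
  by (rule pair_measure_distr[OF measurable_outer measurable_outer])
     (use prob_space_composed in \<open>simp add: composed_def prob_space_imp_sigma_finite\<close>)

lemma nn_integral_composed_pair:
  assumes [measurable]: "G \<in> borel_measurable (borel \<Otimes>\<^sub>M borel)"
  shows "(\<integral>\<^sup>+z. G z \<partial>(composed \<Otimes>\<^sub>M composed)) = (\<integral>\<^sup>+z. G (outer (fst z), outer (snd z)) \<partial>(\<Gamma> \<Otimes>\<^sub>M \<Gamma>))"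
  unfolding composed_pair_measure by (subst nn_integral_distr) (simp_all add: case_prod_beta)

lemma AE_composed_pair:
  assumes [measurable]: "Measurable.pred (borel \<Otimes>\<^sub>M borel) P"
    and "AE z in \<Gamma> \<Otimes>\<^sub>M \<Gamma>. P (outer (fst z), outer (snd z))"
  shows "AE z in composed \<Otimes>\<^sub>M composed. P z"
  unfolding composed_pair_measure using assms(2) by (subst AE_distr_iff) (simp_all add: case_prod_beta)

lemma nn_integral_distortion_fst_le:
  "(\<integral>\<^sup>+z. ennreal (distortion (fst (fst z), fst (snd z)) powr r) \<partial>(\<Gamma> \<Otimes>\<^sub>M \<Gamma>))
     \<le> ennreal ((1 + e\<^sub>2)\<^sup>2) * (\<integral>\<^sup>+z. ennreal (distortion z powr r) \<partial>(\<pi>\<^sub>1 \<Otimes>\<^sub>M \<pi>\<^sub>1))"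
proof -
  have "ennreal ((1 + e\<^sub>2)\<^sup>2) = ennreal (1 + e\<^sub>2) * ennreal (1 + e\<^sub>2)"
    using e\<^sub>2 by (simp add: power2_eq_square ennreal_mult del: ennreal_plus)
  then show ?thesis
    using nn_integral_pair_map_le[OF \<Gamma>.sigma_finite_measure_axioms \<pi>\<^sub>1.sigma_finite_measure_axioms
        measurable_coupling_components(1) nn_integral_fst_le, of "\<lambda>z. ennreal (distortion z powr r)"]
    by simp
qed

lemma nn_integral_distortion_snd_le:
  "(\<integral>\<^sup>+z. ennreal (distortion (snd (fst z), snd (snd z)) powr r) \<partial>(\<Gamma> \<Otimes>\<^sub>M \<Gamma>))
     \<le> ennreal ((1 + e\<^sub>1)\<^sup>2) * (\<integral>\<^sup>+z. ennreal (distortion z powr r) \<partial>(\<pi>\<^sub>2 \<Otimes>\<^sub>M \<pi>\<^sub>2))"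
proof -
  have "ennreal ((1 + e\<^sub>1)\<^sup>2) = ennreal (1 + e\<^sub>1) * ennreal (1 + e\<^sub>1)"
    using e\<^sub>1 by (simp add: power2_eq_square ennreal_mult del: ennreal_plus)
  then show ?thesis
    using nn_integral_pair_map_le[OF \<Gamma>.sigma_finite_measure_axioms \<pi>\<^sub>2.sigma_finite_measure_axioms
        measurable_coupling_components(2) nn_integral_snd_le, of "\<lambda>z. ennreal (distortion z powr r)"]
    by simp
qed

lemma AE_distortion_fst_le_top:
  "AE z in \<Gamma> \<Otimes>\<^sub>M \<Gamma>. distortion (fst (fst z), fst (snd z)) \<le> dis_norm \<top> \<pi>\<^sub>1"
proof (rule AE_pair_map_of_dominated[OF \<Gamma>.sigma_finite_measure_axioms \<pi>\<^sub>1.sigma_finite_measure_axioms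
      measurable_coupling_components(1) nn_integral_fst_le _ AE_distortion_le_dis_norm_top[OF compact_X compact_Y sets_\<pi>\<^sub>1]])
  show "Measurable.pred (\<pi>\<^sub>1 \<Otimes>\<^sub>M \<pi>\<^sub>1) (\<lambda>z. distortion z \<le> dis_norm \<top> \<pi>\<^sub>1)"
    by measurable
qed

lemma AE_distortion_snd_le_top:
  "AE z in \<Gamma> \<Otimes>\<^sub>M \<Gamma>. distortion (snd (fst z), snd (snd z)) \<le> dis_norm \<top> \<pi>\<^sub>2"
proof (rule AE_pair_map_of_dominated[OF \<Gamma>.sigma_finite_measure_axioms \<pi>\<^sub>2.sigma_finite_measure_axioms
      measurable_coupling_components(2) nn_integral_snd_le _ AE_distortion_le_dis_norm_top[OF compact_Y compact_Z sets_\<pi>\<^sub>2]])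
  show "Measurable.pred (\<pi>\<^sub>2 \<Otimes>\<^sub>M \<pi>\<^sub>2) (\<lambda>z. distortion z \<le> dis_norm \<top> \<pi>\<^sub>2)"
    by measurable
qed

lemma nn_integral_distortion_fst_powr_le:
  assumes "p \<noteq> \<top>" "1 \<le> p"
  shows "(\<integral>\<^sup>+z. ennreal (distortion (fst (fst z), fst (snd z)) powr enn2real p) \<partial>(\<Gamma> \<Otimes>\<^sub>M \<Gamma>))
    \<le> ennreal ((pfactor p e\<^sub>2 * dis_norm p \<pi>\<^sub>1) powr enn2real p)"
proof -
  have "(\<integral>\<^sup>+z. ennreal (distortion (fst (fst z), fst (snd z)) powr enn2real p) \<partial>(\<Gamma> \<Otimes>\<^sub>M \<Gamma>))
      \<le> ennreal ((1 + e\<^sub>2)\<^sup>2) * ennreal (dis_norm p \<pi>\<^sub>1 powr enn2real p)"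
    using nn_integral_distortion_fst_le[of "enn2real p"]
    by (simp add: nn_integral_distortion_powr[OF compact_X compact_Y prob_\<pi>\<^sub>1 assms])
  also have "\<dots> = ennreal ((pfactor p e\<^sub>2 * dis_norm p \<pi>\<^sub>1) powr enn2real p)"
    using pfactor_powr[OF assms e\<^sub>2] pfactor_nonneg[of p e\<^sub>2] dis_norm_nonneg[OF prob_\<pi>\<^sub>1, of p]
    by (simp add: powr_mult ennreal_mult)
  finally show ?thesis .
qed

lemma nn_integral_distortion_snd_powr_le:
  assumes "p \<noteq> \<top>" "1 \<le> p"
  shows "(\<integral>\<^sup>+z. ennreal (distortion (snd (fst z), snd (snd z)) powr enn2real p) \<partial>(\<Gamma> \<Otimes>\<^sub>M \<Gamma>))
    \<le> ennreal ((pfactor p e\<^sub>1 * dis_norm p \<pi>\<^sub>2) powr enn2real p)"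
proof -
  have "(\<integral>\<^sup>+z. ennreal (distortion (snd (fst z), snd (snd z)) powr enn2real p) \<partial>(\<Gamma> \<Otimes>\<^sub>M \<Gamma>))
      \<le> ennreal ((1 + e\<^sub>1)\<^sup>2) * ennreal (dis_norm p \<pi>\<^sub>2 powr enn2real p)"
    using nn_integral_distortion_snd_le[of "enn2real p"]
    by (simp add: nn_integral_distortion_powr[OF compact_Y compact_Z prob_\<pi>\<^sub>2 assms])
  also have "\<dots> = ennreal ((pfactor p e\<^sub>1 * dis_norm p \<pi>\<^sub>2) powr enn2real p)"
    using pfactor_powr[OF assms e\<^sub>1] pfactor_nonneg[of p e\<^sub>1] dis_norm_nonneg[OF prob_\<pi>\<^sub>2, of p]
    by (simp add: powr_mult ennreal_mult)
  finally show ?thesis .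
qed

lemma dis_norm_composed_le_finite:
  assumes p: "p \<noteq> \<top>" "1 \<le> p"
  shows "dis_norm p composed \<le> pfactor p e\<^sub>2 * dis_norm p \<pi>\<^sub>1 + pfactor p e\<^sub>1 * dis_norm p \<pi>\<^sub>2 + 4 * \<delta>"
proof -
  define q where "q = enn2real p"
  have q: "1 \<le> q" unfolding q_def by (rule one_le_enn2real[OF p])
  define a\<^sub>1 where "a\<^sub>1 = pfactor p e\<^sub>2 * dis_norm p \<pi>\<^sub>1"
  define a\<^sub>2 where "a\<^sub>2 = pfactor p e\<^sub>1 * dis_norm p \<pi>\<^sub>2"
  have a: "0 \<le> a\<^sub>1" "0 \<le> a\<^sub>2"
    unfolding a\<^sub>1_def a\<^sub>2_def using dis_norm_nonneg[OF prob_\<pi>\<^sub>1] dis_norm_nonneg[OF prob_\<pi>\<^sub>2]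
    by (simp_all add: pfactor_nonneg)
  let ?D\<^sub>1 = "\<lambda>z. distortion (fst (fst z), fst (snd z))" and ?D\<^sub>2 = "\<lambda>z. distortion (snd (fst z), snd (snd z))"
  \<comment> \<open>Minkowski with the bounds \<open>a\<^sub>1 + \<delta>\<close>, \<open>2\<delta>\<close>, \<open>a\<^sub>2 + \<delta>\<close>: the slack keeps them positive.\<close>
  have "ennreal (a\<^sub>1 powr q) \<le> ennreal ((a\<^sub>1 + \<delta>) powr q)" "ennreal (a\<^sub>2 powr q) \<le> ennreal ((a\<^sub>2 + \<delta>) powr q)"
    using a \<delta> q by (intro ennreal_leI powr_mono2; simp)+
  then have bounds: "(\<integral>\<^sup>+z. ennreal (?D\<^sub>1 z powr q) \<partial>(\<Gamma> \<Otimes>\<^sub>M \<Gamma>)) \<le> ennreal ((a\<^sub>1 + \<delta>) powr q)"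
    "(\<integral>\<^sup>+z. ennreal (?D\<^sub>2 z powr q) \<partial>(\<Gamma> \<Otimes>\<^sub>M \<Gamma>)) \<le> ennreal ((a\<^sub>2 + \<delta>) powr q)"
    "(\<integral>\<^sup>+z. ennreal ((2 * \<delta>) powr q) \<partial>(\<Gamma> \<Otimes>\<^sub>M \<Gamma>)) \<le> ennreal ((2 * \<delta>) powr q)"
    using nn_integral_distortion_fst_powr_le[OF p] nn_integral_distortion_snd_powr_le[OF p]
    unfolding a\<^sub>1_def a\<^sub>2_def q_def by (auto simp: \<Gamma>\<Gamma>.emeasure_space_1 intro: order_trans)
  have "(\<integral>\<^sup>+z. ennreal (distortion z powr q) \<partial>(composed \<Otimes>\<^sub>M composed))
      = (\<integral>\<^sup>+z. ennreal (distortion (outer (fst z), outer (snd z)) powr q) \<partial>(\<Gamma> \<Otimes>\<^sub>M \<Gamma>))"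
    by (rule nn_integral_composed_pair) measurable
  also have "\<dots> \<le> (\<integral>\<^sup>+z. ennreal ((?D\<^sub>1 z + 2 * \<delta> + ?D\<^sub>2 z) powr q) \<partial>(\<Gamma> \<Otimes>\<^sub>M \<Gamma>))"
    using AE_distortion_outer_le
    by (intro nn_integral_mono_AE, elim eventually_mono) (use q in \<open>auto intro!: ennreal_leI powr_mono2\<close>)
  also have "\<dots> \<le> ennreal ((a\<^sub>1 + \<delta> + 2 * \<delta> + (a\<^sub>2 + \<delta>)) powr q)"
    by (intro nn_integral_powr_add3_le[OF _ _ _ _ _ _ q _ _ _ bounds(1,3,2)])
       (measurable, measurable, measurable, simp_all add: a \<delta> add_nonneg_pos less_imp_le)
  also have "a\<^sub>1 + \<delta> + 2 * \<delta> + (a\<^sub>2 + \<delta>) = a\<^sub>1 + a\<^sub>2 + 4 * \<delta>"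
    by simp
  finally show ?thesis
    unfolding q_def using a \<delta> by (intro dis_norm_le_of_nn_integral[OF p]) (simp_all add: a\<^sub>1_def a\<^sub>2_def)
qed

lemma dis_norm_composed_le_top:
  "dis_norm \<top> composed \<le> dis_norm \<top> \<pi>\<^sub>1 + dis_norm \<top> \<pi>\<^sub>2 + 2 * \<delta>"
proof (rule dis_norm_top_le)
  show "0 \<le> dis_norm \<top> \<pi>\<^sub>1 + dis_norm \<top> \<pi>\<^sub>2 + 2 * \<delta>"
    using dis_norm_nonneg[OF prob_\<pi>\<^sub>1] dis_norm_nonneg[OF prob_\<pi>\<^sub>2] \<delta> by (simp add: add_nonneg_nonneg)
  have "AE z in \<Gamma> \<Otimes>\<^sub>M \<Gamma>. distortion (outer (fst z), outer (snd z)) \<le> dis_norm \<top> \<pi>\<^sub>1 + dis_norm \<top> \<pi>\<^sub>2 + 2 * \<delta>"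
    using AE_distortion_outer_le AE_distortion_fst_le_top AE_distortion_snd_le_top by eventually_elim linarith
  then show "AE z in composed \<Otimes>\<^sub>M composed. distortion z \<le> dis_norm \<top> \<pi>\<^sub>1 + dis_norm \<top> \<pi>\<^sub>2 + 2 * \<delta>"
    by (intro AE_composed_pair) measurable
qed

lemma dis_norm_composed_le:
  assumes "1 \<le> p"
  shows "dis_norm p composed \<le> pfactor p e\<^sub>2 * dis_norm p \<pi>\<^sub>1 + pfactor p e\<^sub>1 * dis_norm p \<pi>\<^sub>2 + 4 * \<delta>"
proof (cases "p = \<top>")
  case True
  then show ?thesis using dis_norm_composed_le_top \<delta> by (simp add: pfactor_def)
qed (use dis_norm_composed_le_finite assms in blast)

end

lemma product_in_sS:
  fixes \<mu> :: "'a::metric_space measure" and \<nu> :: "'b::metric_space measure"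
  assumes "compact_pmm \<mu>" "compact_pmm \<nu>" "0 \<le> e\<^sub>1" "0 \<le> e\<^sub>2"
  shows "\<mu> \<Otimes>\<^sub>M \<nu> \<in> sS e\<^sub>1 e\<^sub>2 \<mu> \<nu>"
proof -
  have \<mu>: "prob_space \<mu>" "sets \<mu> = sets borel" "compact (UNIV :: 'a set)"
    and \<nu>: "prob_space \<nu>" "sets \<nu> = sets borel" "compact (UNIV :: 'b set)"
    using assms(1,2) by (auto simp: compact_pmm_def)
  have "sets (\<mu> \<Otimes>\<^sub>M \<nu>) = sets (borel \<Otimes>\<^sub>M borel :: ('a \<times> 'b) measure)"
    using \<mu>(2) \<nu>(2) by (rule sets_pair_measure_cong)
  also have "\<dots> = sets borel" by (rule sets_pair_borel_compact[OF \<mu>(3) \<nu>(3)])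
  finally have sets: "sets (\<mu> \<Otimes>\<^sub>M \<nu>) = sets borel" .
  have "distr (\<mu> \<Otimes>\<^sub>M \<nu>) borel fst = distr (\<mu> \<Otimes>\<^sub>M \<nu>) \<mu> fst"
    by (rule distr_cong) (simp_all add: \<mu>(2))
  also have "\<dots> = \<mu>" by (rule prob_space.distr_pair_fst[OF \<nu>(1)])
  finally have fst: "distr (\<mu> \<Otimes>\<^sub>M \<nu>) borel fst = \<mu>" .
  have "distr (\<mu> \<Otimes>\<^sub>M \<nu>) borel snd = distr (\<mu> \<Otimes>\<^sub>M \<nu>) \<nu> snd"
    by (rule distr_cong) (simp_all add: \<nu>(2))
  also have "\<dots> = \<nu>" by (rule distr_pair_snd[OF \<mu>(1) prob_space_imp_sigma_finite[OF \<nu>(1)]])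
  finally have snd: "distr (\<mu> \<Otimes>\<^sub>M \<nu>) borel snd = \<nu>" .
  from fst snd
  show ?thesis
    using prob_space_pair[OF \<mu>(1) \<nu>(1)] sets assms(3,4) \<mu>(1) \<nu>(1)
    by (simp add: sS_def mutual_bdd_refl prob_space_def)
qed

lemma composed_coupling_exists:
  fixes \<mu>\<^sub>X :: "'a::metric_space measure" and \<mu>\<^sub>Y :: "'b::metric_space measure"
    and \<mu>\<^sub>Z :: "'c::metric_space measure"
  assumes "0 \<le> e\<^sub>1" "0 \<le> e\<^sub>2" "1 \<le> p" "0 < \<delta>"
    and "compact_pmm \<mu>\<^sub>X" "compact_pmm \<mu>\<^sub>Y" "compact_pmm \<mu>\<^sub>Z"
    and \<pi>\<^sub>1: "\<pi>\<^sub>1 \<in> sS e\<^sub>1 e\<^sub>2 \<mu>\<^sub>X \<mu>\<^sub>Y" and \<pi>\<^sub>2: "\<pi>\<^sub>2 \<in> sS e\<^sub>1 e\<^sub>2 \<mu>\<^sub>Y \<mu>\<^sub>Z"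
  shows "\<exists>\<gamma>\<in>sS (e\<^sub>1 + e\<^sub>2 + e\<^sub>1 * e\<^sub>2) (e\<^sub>1 + e\<^sub>2 + e\<^sub>1 * e\<^sub>2) \<mu>\<^sub>X \<mu>\<^sub>Z.
           dis_norm p \<gamma> \<le> pfactor p e\<^sub>2 * dis_norm p \<pi>\<^sub>1 + pfactor p e\<^sub>1 * dis_norm p \<pi>\<^sub>2 + 4 * \<delta>"
proof -
  have X: "compact (UNIV :: 'a set)" "prob_space \<mu>\<^sub>X" "sets \<mu>\<^sub>X = sets borel"
    and Y: "compact (UNIV :: 'b set)" "prob_space \<mu>\<^sub>Y" "sets \<mu>\<^sub>Y = sets borel"
    and Z: "compact (UNIV :: 'c set)" "prob_space \<mu>\<^sub>Z" "sets \<mu>\<^sub>Z = sets borel"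
    using assms(5-7) by (auto simp: compact_pmm_def)
  have couplings: "prob_space \<pi>\<^sub>1" "sets \<pi>\<^sub>1 = sets borel" "prob_space \<pi>\<^sub>2" "sets \<pi>\<^sub>2 = sets borel"
    "mutual_bdd (distr \<pi>\<^sub>1 borel snd) \<mu>\<^sub>Y e\<^sub>2" "mutual_bdd (distr \<pi>\<^sub>2 borel fst) \<mu>\<^sub>Y e\<^sub>1"
    using \<pi>\<^sub>1 \<pi>\<^sub>2 by (auto simp: sS_def)
  obtain \<Gamma> where "prob_space \<Gamma>" "sets \<Gamma> = sets (\<pi>\<^sub>1 \<Otimes>\<^sub>M \<pi>\<^sub>2)"
    "mutual_bdd (distr \<Gamma> borel fst) \<pi>\<^sub>1 e\<^sub>2" "mutual_bdd (distr \<Gamma> borel snd) \<pi>\<^sub>2 e\<^sub>1"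
    "AE q in \<Gamma>. dist (snd (fst q)) (fst (snd q)) \<le> \<delta>"
    using glued_coupling_exists[OF Y(1) assms(4) couplings(1-4) Y(2,3) assms(1,2) couplings(5,6)] .
  then interpret coupling_composition \<pi>\<^sub>1 \<pi>\<^sub>2 \<Gamma> e\<^sub>1 e\<^sub>2 \<delta>
    using X(1) Y(1) Z(1) couplings(1-4) assms(1,2,4) by (simp add: coupling_composition_def)
  show ?thesis
    using composed_in_sS[OF \<pi>\<^sub>1 \<pi>\<^sub>2 X(2,3) Z(2,3)] dis_norm_composed_le[OF assms(3)] by blast
qed

lemma cInf_le_scaled_add:
  fixes S T U :: "real set"
  assumes "bdd_below S" "T \<noteq> {}" "U \<noteq> {}" "0 \<le> a" "0 \<le> b"
    and approx: "\<And>t u \<epsilon>. t \<in> T \<Longrightarrow> u \<in> U \<Longrightarrow> 0 < \<epsilon> \<Longrightarrow> \<exists>s\<in>S. s \<le> a * t + b * u + \<epsilon>"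
  shows "Inf S \<le> a * Inf T + b * Inf U"
proof (rule field_le_epsilon)
  fix \<epsilon> :: real assume "0 < \<epsilon>"
  define \<eta> where "\<eta> = \<epsilon> / (a + b + 1)"
  have \<eta>: "0 < \<eta>" "(a + b + 1) * \<eta> = \<epsilon>"
    unfolding \<eta>_def using \<open>0 < \<epsilon>\<close> assms(4,5) by auto
  obtain t where t: "t \<in> T" "t < Inf T + \<eta>" using cInf_lessD[OF assms(2), of "Inf T + \<eta>"] \<eta> by auto
  obtain u where u: "u \<in> U" "u < Inf U + \<eta>" using cInf_lessD[OF assms(3), of "Inf U + \<eta>"] \<eta> by auto
  obtain s where s: "s \<in> S" "s \<le> a * t + b * u + \<eta>" using approx[OF t(1) u(1) \<eta>(1)] by blast
  have "Inf S \<le> s" using s(1) assms(1) by (rule cInf_lower)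
  also have "\<dots> \<le> a * (Inf T + \<eta>) + b * (Inf U + \<eta>) + \<eta>"
    using s(2) t(2) u(2) assms(4,5) by (smt (verit) mult_left_mono)
  also have "\<dots> = a * Inf T + b * Inf U + \<epsilon>"
    using \<eta>(2) by (simp add: algebra_simps)
  finally show "Inf S \<le> a * Inf T + b * Inf U + \<epsilon>" .
qed

theorem theorem3p10:
  fixes \<mu>X :: "'a::metric_space measure" and \<mu>Y :: "'b::metric_space measure"
    and \<mu>Z :: "'c::metric_space measure"
    and e1 e2 :: real and p :: ennreal
  assumes "0 \<le> e1" and "0 \<le> e2" and "1 \<le> p"
    and "compact_pmm \<mu>X" and "compact_pmm \<mu>Y" and "compact_pmm \<mu>Z"
  shows "sPGW (e1 + e2 + e1 * e2) (e1 + e2 + e1 * e2) p \<mu>X \<mu>Z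
           \<le> pfactor p e2 * sPGW e1 e2 p \<mu>X \<mu>Y + pfactor p e1 * sPGW e1 e2 p \<mu>Y \<mu>Z"
  unfolding sPGW_def
proof (rule cInf_le_scaled_add)
  show "bdd_below (dis_norm p ` sS (e1 + e2 + e1 * e2) (e1 + e2 + e1 * e2) \<mu>X \<mu>Z)"
    by (rule bdd_belowI[of _ 0]) (auto simp: sS_def intro: dis_norm_nonneg)
  show "dis_norm p ` sS e1 e2 \<mu>X \<mu>Y \<noteq> {}" "dis_norm p ` sS e1 e2 \<mu>Y \<mu>Z \<noteq> {}"
    using product_in_sS assms by blast+
  fix t u \<epsilon> :: real
  assume "t \<in> dis_norm p ` sS e1 e2 \<mu>X \<mu>Y" "u \<in> dis_norm p ` sS e1 e2 \<mu>Y \<mu>Z" "0 < \<epsilon>"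
  then show "\<exists>s\<in>dis_norm p ` sS (e1 + e2 + e1 * e2) (e1 + e2 + e1 * e2) \<mu>X \<mu>Z.
      s \<le> pfactor p e2 * t + pfactor p e1 * u + \<epsilon>"
    using composed_coupling_exists[OF assms(1-3) _ assms(4-6), of "\<epsilon> / 4"] by fastforce
qed (simp_all add: pfactor_nonneg)

end
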